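(* Let $n\geq2$, $d\geq0$, and let $u:(d,\infty)\to\mathbb{R}^+$ be a solution of $$u''(x)=\Big[\frac{xu'(x)-u(x)}{2}+\frac{n-1}{u(x)}\Big]\big(1+(u'(x))^2\big)$$ satisfying, for a constant $\sigma>0$, the identity $$u(x)=2(n-1)x\int_x^\infty\frac{1}{t^2}\bigg\{\int_t^\infty\frac{s}{2}\,\frac{1+(u'(s))^2}{u(s)}\,e^{-\frac12\int_t^s z(1+(u'(z))^2)\,dz}\,ds\bigg\}dt+\sigma x\quad (x\in(d,\infty)).$$ Then for all $x\in(d,\infty)$, $$\sup_{s\in(x,\infty)}|u(s)-\sigma s|\leq\frac{2(n-1)}{\sigma x},\qquad \sup_{s\in(x,\infty)}|u'(s)-\sigma|\leq\frac{2(n-1)}{\sigma x^2}.$$ In particular $u$ extends to a solution $u_\sigma:(0,\infty)\to\mathbb{R}^+$ of the same equation. *)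

theory Defs
  imports "HOL-Analysis.Analysis"
begin

definition ode_solution_on ::
  "nat \<Rightarrow> real set \<Rightarrow> (real \<Rightarrow> real) \<Rightarrow> (real \<Rightarrow> real) \<Rightarrow> (real \<Rightarrow> real) \<Rightarrow> bool" where
  "ode_solution_on n I u u' u'' \<longleftrightarrow>
     (\<forall>x\<in>I. u x > 0
        \<and> (u has_real_derivative u' x) (at x)
        \<and> (u' has_real_derivative u'' x) (at x)
        \<and> u'' x = ((x * u' x - u x) / 2 + (real n - 1) / u x) * (1 + (u' x)\<^sup>2))"

definition exp_weight :: "(real \<Rightarrow> real) \<Rightarrow> real \<Rightarrow> real \<Rightarrow> real" where
  "exp_weight u' t s = exp (- (1/2) * integral {t..s} (\<lambda>z. z * (1 + (u' z)\<^sup>2)))"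

definition inner_integrand ::
  "(real \<Rightarrow> real) \<Rightarrow> (real \<Rightarrow> real) \<Rightarrow> real \<Rightarrow> real \<Rightarrow> real" where
  "inner_integrand u u' t s = s / 2 * (1 + (u' s)\<^sup>2) / u s * exp_weight u' t s"

definition inner_integral :: "(real \<Rightarrow> real) \<Rightarrow> (real \<Rightarrow> real) \<Rightarrow> real \<Rightarrow> real" where
  "inner_integral u u' t = integral {t..} (inner_integrand u u' t)"

end

theory Submission
  imports Defs
begin

text \<open>
  The identity says \<open>u(x) = x (\<sigma> + 2(n - 1) F(x))\<close> with \<open>F\<close> the tail integral of a nonnegative
  function, so \<open>u \<ge> \<sigma>x\<close>. The inner integrand at \<open>t\<close> is \<open>-E'/u\<close> for the exponential weight \<open>E\<close>,
  which falls from \<open>E(t) = 1\<close>, so the inner integral is at most \<open>1/(\<sigma>t)\<close>; thus \<open>F(x) \<le> 1/(2\<sigma>x\<^sup>2)\<close> and \<open>F\<close>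
  decreases at rate at most \<open>1/(\<sigma>x\<^sup>3)\<close>. This bounds \<open>u - \<sigma>x\<close> directly, and \<open>u' - \<sigma>\<close> through the
  difference quotients of \<open>u(x)/x\<close>; it also gives \<open>x u' \<le> u\<close>.

  For the extension the equation is run backwards. The slope defect \<open>p = x u' - u\<close> has
  \<open>p' = x u''\<close>, and the equation gives \<open>u'' > 0\<close> where \<open>p = 0\<close> and \<open>u'' < 0\<close> where \<open>p = -k\<close>
  once \<open>u \<ge> \<sigma>\<epsilon>\<close> and \<open>k\<close> is large. So \<open>-k(\<epsilon>) \<le> p \<le> 0\<close> to the left of \<open>x\<^sub>0\<close>, and on \<open>[\<epsilon>, x\<^sub>0]\<close> every
  backward continuation stays in a box depending only on \<open>\<epsilon>\<close>. Picard iteration therefore continues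
  it by a step depending only on \<open>\<epsilon>\<close>; finitely many steps get below \<open>\<epsilon>\<close>, and uniqueness makes the
  continuations fit together.
\<close>

lemma nonpos_if_upcrossing:
  fixes f f' :: "real \<Rightarrow> real"
  assumes der: "\<And>t. t \<in> {\<alpha>..\<beta>} \<Longrightarrow> (f has_real_derivative f' t) (at t)"
    and end_nonpos: "f \<beta> \<le> 0"
    and zero_crossing: "\<And>t. t \<in> {\<alpha>..\<beta>} \<Longrightarrow> f t = 0 \<Longrightarrow> f' t > 0"
    and t: "t \<in> {\<alpha>..\<beta>}"
  shows "f t \<le> 0"
proof (rule ccontr)
  assume "\<not> f t \<le> 0"
  hence ft: "f t > 0" by simp
  have cont: "continuous_on {\<alpha>..\<beta>} f"
    using der by (meson DERIV_continuous continuous_at_imp_continuous_on)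
  define Z where "Z = {t..\<beta>} \<inter> f -` {..0}"
  have "\<beta> \<in> Z" using t end_nonpos by (auto simp: Z_def)
  moreover have "closed Z" unfolding Z_def
    by (rule continuous_closed_preimage) (use cont t in \<open>auto intro: continuous_on_subset\<close>)
  moreover have bdd: "bdd_below Z" by (auto simp: Z_def bdd_below_def)
  ultimately have zZ: "Inf Z \<in> Z" using closed_contains_Inf by blast
  define z where "z = Inf Z"
  have z_least: "\<And>s. s \<in> Z \<Longrightarrow> z \<le> s" unfolding z_def using bdd by (simp add: cInf_lower)
  have tz: "t \<le> z" "z \<le> \<beta>" "f z \<le> 0" using zZ by (auto simp: Z_def z_def)
  have "continuous_on {t..z} f" using cont t tz by (auto intro: continuous_on_subset)
  then obtain s where s: "t \<le> s" "s \<le> z" "f s = 0"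
    using IVT2'[of f z 0 t] tz ft by auto
  hence "s \<in> Z" using tz by (auto simp: Z_def)
  hence fz: "f z = 0" using z_least s by fastforce
  have "t < z" using fz ft tz by (cases "t = z") auto
  have zI: "z \<in> {\<alpha>..\<beta>}" using t tz by auto
  obtain e where e: "e > 0" "\<And>h. h > 0 \<Longrightarrow> h < e \<Longrightarrow> f (z - h) < f z"
    using DERIV_pos_inc_left[OF der[OF zI] zero_crossing[OF zI fz]] by blast
  define h where "h = min (e/2) ((z - t)/2)"
  have h: "h > 0" "h < e" "h \<le> (z - t)/2" using e \<open>t < z\<close> unfolding h_def by (auto simp: min_def)
  have "z - h \<in> Z" using e(2)[OF h(1,2)] fz h tz by (auto simp: Z_def)
  thus False using z_least h by fastforce
qed

lemma integral_le_if_partial_integrals_le: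
  fixes g :: "real \<Rightarrow> real"
  assumes g_int: "g integrable_on {a..}" and g_nonneg: "\<And>x. a \<le> x \<Longrightarrow> 0 \<le> g x"
    and partial_le: "\<And>b. a \<le> b \<Longrightarrow> integral {a..b} g \<le> B"
  shows "integral {a..} g \<le> B"
proof -
  define f where "f k = (\<lambda>x. if x \<in> {a..a + real k} then g x else 0)" for k :: nat
  have sub: "{a..a + real k} \<inter> {a..} = {a..a + real k}" for k by auto
  have f_int: "f k integrable_on {a..}" for k
    using integrable_on_subcbox[OF g_int, of a "a + real k"]
    unfolding f_def integrable_restrict_Int sub by simp
  have f_integral: "integral {a..} (f k) = integral {a..a + real k} g" for k
    unfolding f_def integral_restrict_Int sub ..
  have "(\<lambda>k. f k x) \<longlonglongrightarrow> g x" if "x \<in> {a..}" for x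
  proof (rule tendsto_eventually)
    obtain N :: nat where "x - a \<le> real N" using real_arch_simple by blast
    thus "\<forall>\<^sub>F k in sequentially. f k x = g x"
      unfolding eventually_sequentially using that by (intro exI[of _ N]) (auto simp: f_def)
  qed
  hence "(\<lambda>k. integral {a..} (f k)) \<longlonglongrightarrow> integral {a..} g"
    using dominated_convergence(2)[of f "{a..}" g g, OF f_int g_int] g_nonneg by (auto simp: f_def)
  thus ?thesis
    by (rule LIMSEQ_le_const2) (auto simp: f_integral intro!: partial_le)
qed

lemma convergent_if_summable_differences:
  fixes X :: "nat \<Rightarrow> 'a::banach"
  assumes "summable (\<lambda>k. X (Suc k) - X k)"
  shows "convergent X"
proof -
  have "(\<lambda>k. X 0 + (\<Sum>j<k. X (Suc j) - X j)) \<longlonglongrightarrow> X 0 + (\<Sum>j. X (Suc j) - X j)"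
    by (intro tendsto_intros summable_LIMSEQ assms)
  thus ?thesis unfolding sum_lessThan_telescope by (auto simp: convergent_def)
qed

lemma has_real_derivative_glue:
  fixes f g :: "real \<Rightarrow> real"
  assumes "a < c" and f: "(f has_real_derivative D) (at c within {a..c})"
    and g: "(g has_real_derivative D) (at c)" and "f c = g c"
  shows "((\<lambda>x. if x \<le> c then f x else g x) has_real_derivative D) (at c)"
proof -
  define h where "h = (\<lambda>x. if x \<le> c then f x else g x)"
  have "(f has_real_derivative D) (at c within {a<..c})"
    by (rule DERIV_subset[OF f]) auto
  hence left: "(h has_real_derivative D) (at c within {a<..c})"
    by (rule has_field_derivative_transform_within[OF _ zero_less_one]) (use \<open>a < c\<close> in \<open>auto simp: h_def\<close>)
  have "(g has_real_derivative D) (at c within {c..})" using g by (rule has_field_derivative_at_within)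
  hence right: "(h has_real_derivative D) (at c within {c..})"
    by (rule has_field_derivative_transform_within[OF _ zero_less_one]) (use \<open>f c = g c\<close> in \<open>auto simp: h_def\<close>)
  have "((\<lambda>y. (h y - h c) / (y - c)) \<longlongrightarrow> D) (at c within ({a<..c} \<union> {c..}))"
    using left right unfolding has_field_derivative_iff by (simp add: Lim_within_Un)
  moreover have "{a<..c} \<union> {c..} = {a<..}" using \<open>a < c\<close> by auto
  moreover have "at c within {a<..} = at c" using \<open>a < c\<close> by (intro at_within_open) auto
  ultimately show ?thesis unfolding h_def[symmetric] has_field_derivative_iff by simp
qed

definition clip :: "real \<Rightarrow> real \<Rightarrow> real \<Rightarrow> real" where
  "clip lo hi z = max lo (min hi z)"

lemma clip_in_range: "lo \<le> hi \<Longrightarrow> lo \<le> clip lo hi z \<and> clip lo hi z \<le> hi"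
  unfolding clip_def by auto

lemma clip_lipschitz: "lo \<le> hi \<Longrightarrow> \<bar>clip lo hi z - clip lo hi z'\<bar> \<le> \<bar>z - z'\<bar>"
  unfolding clip_def by (auto simp: max_def min_def abs_if)

lemma clip_id: "lo \<le> z \<Longrightarrow> z \<le> hi \<Longrightarrow> clip lo hi z = z"
  unfolding clip_def by auto

lemma continuous_on_clip[continuous_intros]:
  "continuous_on S f \<Longrightarrow> continuous_on S (\<lambda>t. clip lo hi (f t))"
  unfolding clip_def by (intro continuous_intros)

section \<open>Local existence and uniqueness for planar systems\<close>

locale picard_pair =
  fixes f g :: "real \<Rightarrow> real \<Rightarrow> real \<Rightarrow> real" and \<alpha> \<beta> y0 w0 M L :: real
  assumes interval: "\<alpha> \<le> \<beta>" and L_nonneg: "0 \<le> L" and short: "4 * (\<beta> - \<alpha>) * L \<le> 1"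
    and f_bounded: "\<And>t y w. \<bar>f t y w\<bar> \<le> M" and g_bounded: "\<And>t y w. \<bar>g t y w\<bar> \<le> M"
    and f_lipschitz: "\<And>t y w y' w'. \<bar>f t y w - f t y' w'\<bar> \<le> L * (\<bar>y - y'\<bar> + \<bar>w - w'\<bar>)"
    and g_lipschitz: "\<And>t y w y' w'. \<bar>g t y w - g t y' w'\<bar> \<le> L * (\<bar>y - y'\<bar> + \<bar>w - w'\<bar>)"
    and f_continuous: "\<And>y w. continuous_on {\<alpha>..\<beta>} y \<Longrightarrow> continuous_on {\<alpha>..\<beta>} w \<Longrightarrow>
                  continuous_on {\<alpha>..\<beta>} (\<lambda>t. f t (y t) (w t))"
    and g_continuous: "\<And>y w. continuous_on {\<alpha>..\<beta>} y \<Longrightarrow> continuous_on {\<alpha>..\<beta>} w \<Longrightarrow>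
                  continuous_on {\<alpha>..\<beta>} (\<lambda>t. g t (y t) (w t))"
begin

definition picard_y :: "(real \<Rightarrow> real) \<Rightarrow> (real \<Rightarrow> real) \<Rightarrow> real \<Rightarrow> real" where
  "picard_y y w t = y0 - integral {t..\<beta>} (\<lambda>s. f s (y s) (w s))"

definition picard_w :: "(real \<Rightarrow> real) \<Rightarrow> (real \<Rightarrow> real) \<Rightarrow> real \<Rightarrow> real" where
  "picard_w y w t = w0 - integral {t..\<beta>} (\<lambda>s. g s (y s) (w s))"

lemma M_nonneg: "0 \<le> M"
  using f_bounded[of 0 0 0] by simp

lemma continuous_on_picard:
  assumes "continuous_on {\<alpha>..\<beta>} y" "continuous_on {\<alpha>..\<beta>} w"
  shows "continuous_on {\<alpha>..\<beta>} (picard_y y w)" "continuous_on {\<alpha>..\<beta>} (picard_w y w)"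
  unfolding picard_y_def picard_w_def
  using indefinite_integral_continuous_1'[OF integrable_continuous_real[OF f_continuous[OF assms]]]
    indefinite_integral_continuous_1'[OF integrable_continuous_real[OF g_continuous[OF assms]]]
  by (auto intro!: continuous_intros)

lemma has_real_derivative_picard:
  assumes "continuous_on {\<alpha>..\<beta>} y" "continuous_on {\<alpha>..\<beta>} w" "t \<in> {\<alpha>..\<beta>}"
  shows "(picard_y y w has_real_derivative f t (y t) (w t)) (at t within {\<alpha>..\<beta>})"
    "(picard_w y w has_real_derivative g t (y t) (w t)) (at t within {\<alpha>..\<beta>})"
  unfolding picard_y_def[abs_def] picard_w_def[abs_def]
  using DERIV_diff[OF DERIV_const integral_has_real_derivative'[OF f_continuous[OF assms(1,2)] assms(3)]]
    DERIV_diff[OF DERIV_const integral_has_real_derivative'[OF g_continuous[OF assms(1,2)] assms(3)]]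
  by simp_all

lemma picard_near_initial:
  assumes "continuous_on {\<alpha>..\<beta>} y" "continuous_on {\<alpha>..\<beta>} w" "t \<in> {\<alpha>..\<beta>}"
  shows "\<bar>picard_y y w t - y0\<bar> \<le> M * (\<beta> - t)" "\<bar>picard_w y w t - w0\<bar> \<le> M * (\<beta> - t)"
proof -
  have sub: "{t..\<beta>} \<subseteq> {\<alpha>..\<beta>}" using assms(3) by auto
  show "\<bar>picard_y y w t - y0\<bar> \<le> M * (\<beta> - t)"
    using integral_bound[of t \<beta> "\<lambda>s. f s (y s) (w s)" M] assms(3) f_bounded
      continuous_on_subset[OF f_continuous[OF assms(1,2)] sub]
    by (simp add: picard_y_def)
  show "\<bar>picard_w y w t - w0\<bar> \<le> M * (\<beta> - t)"
    using integral_bound[of t \<beta> "\<lambda>s. g s (y s) (w s)" M] assms(3) g_bounded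
      continuous_on_subset[OF g_continuous[OF assms(1,2)] sub]
    by (simp add: picard_w_def)
qed

lemma picard_contraction:
  assumes cont: "continuous_on {\<alpha>..\<beta>} y" "continuous_on {\<alpha>..\<beta>} w"
      "continuous_on {\<alpha>..\<beta>} y'" "continuous_on {\<alpha>..\<beta>} w'"
    and close: "\<And>s. s \<in> {\<alpha>..\<beta>} \<Longrightarrow> \<bar>y s - y' s\<bar> + \<bar>w s - w' s\<bar> \<le> B"
    and t: "t \<in> {\<alpha>..\<beta>}"
  shows "\<bar>picard_y y w t - picard_y y' w' t\<bar> + \<bar>picard_w y w t - picard_w y' w' t\<bar> \<le> B / 2"
proof -
  have sub: "{t..\<beta>} \<subseteq> {\<alpha>..\<beta>}" using t by auto
  have LB: "0 \<le> L * B" using close[OF t] L_nonneg by simp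
  have "L * B * (\<beta> - t) \<le> L * B * (\<beta> - \<alpha>)" using t LB by (intro mult_left_mono) auto
  also have "\<dots> \<le> B / 4" using short LB close[OF t] mult_right_mono[OF short, of B] by (simp add: algebra_simps)
  finally have small: "L * B * (\<beta> - t) \<le> B / 4" .
  have diff_bound: "\<bar>integral {t..\<beta>} (\<lambda>s. h s (y s) (w s)) - integral {t..\<beta>} (\<lambda>s. h s (y' s) (w' s))\<bar> \<le> B / 4"
    if lip: "\<And>s y w y' w'. \<bar>h s y w - h s y' w'\<bar> \<le> L * (\<bar>y - y'\<bar> + \<bar>w - w'\<bar>)"
      and hc: "\<And>y w. continuous_on {\<alpha>..\<beta>} y \<Longrightarrow> continuous_on {\<alpha>..\<beta>} w \<Longrightarrow>
                  continuous_on {\<alpha>..\<beta>} (\<lambda>t. h t (y t) (w t))"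
    for h :: "real \<Rightarrow> real \<Rightarrow> real \<Rightarrow> real"
  proof -
    have c1: "continuous_on {t..\<beta>} (\<lambda>s. h s (y s) (w s))"
      and c2: "continuous_on {t..\<beta>} (\<lambda>s. h s (y' s) (w' s))"
      using continuous_on_subset[OF hc sub] cont by auto
    have "\<bar>h s (y s) (w s) - h s (y' s) (w' s)\<bar> \<le> L * B" if "s \<in> {t..\<beta>}" for s
      using order_trans[OF lip mult_left_mono[OF close L_nonneg]] that sub by auto
    moreover have "continuous_on {t..\<beta>} (\<lambda>s. h s (y s) (w s) - h s (y' s) (w' s))"
      using c1 c2 by (intro continuous_intros)
    ultimately have "\<bar>integral {t..\<beta>} (\<lambda>s. h s (y s) (w s) - h s (y' s) (w' s))\<bar> \<le> L * B * (\<beta> - t)"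
      using integral_bound[of t \<beta> "\<lambda>s. h s (y s) (w s) - h s (y' s) (w' s)" "L * B"] t by auto
    thus ?thesis
      using small integral_diff[OF integrable_continuous_real[OF c1] integrable_continuous_real[OF c2]]
      by simp
  qed
  have "\<bar>picard_y y w t - picard_y y' w' t\<bar> \<le> B / 4"
    using diff_bound[of f, OF f_lipschitz f_continuous] unfolding picard_y_def abs_le_iff by linarith
  moreover have "\<bar>picard_w y w t - picard_w y' w' t\<bar> \<le> B / 4"
    using diff_bound[of g, OF g_lipschitz g_continuous] unfolding picard_w_def abs_le_iff by linarith
  ultimately show ?thesis by linarith
qed

primrec picard_iter :: "nat \<Rightarrow> (real \<Rightarrow> real) \<times> (real \<Rightarrow> real)" where
  "picard_iter 0 = (\<lambda>_. y0, \<lambda>_. w0)"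
| "picard_iter (Suc k) = (picard_y (fst (picard_iter k)) (snd (picard_iter k)),
                          picard_w (fst (picard_iter k)) (snd (picard_iter k)))"

abbreviation "iter_y k \<equiv> fst (picard_iter k)"
abbreviation "iter_w k \<equiv> snd (picard_iter k)"

lemma continuous_on_picard_iter:
  "continuous_on {\<alpha>..\<beta>} (iter_y k) \<and> continuous_on {\<alpha>..\<beta>} (iter_w k)"
  by (induction k) (simp_all add: continuous_on_picard)

lemma picard_iter_step_le:
  assumes "t \<in> {\<alpha>..\<beta>}"
  shows "\<bar>iter_y (Suc k) t - iter_y k t\<bar> + \<bar>iter_w (Suc k) t - iter_w k t\<bar> \<le> 2 * M * (\<beta> - \<alpha>) / 2 ^ k"
  using assms
proof (induction k arbitrary: t)
  case 0
  have "M * (\<beta> - t) \<le> M * (\<beta> - \<alpha>)" using 0 M_nonneg by (intro mult_left_mono) auto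
  thus ?case using picard_near_initial[of "\<lambda>_. y0" "\<lambda>_. w0" t] 0 by simp
next
  case (Suc k)
  have "\<bar>picard_y (iter_y (Suc k)) (iter_w (Suc k)) t - picard_y (iter_y k) (iter_w k) t\<bar>
      + \<bar>picard_w (iter_y (Suc k)) (iter_w (Suc k)) t - picard_w (iter_y k) (iter_w k) t\<bar>
      \<le> 2 * M * (\<beta> - \<alpha>) / 2 ^ k / 2"
    by (rule picard_contraction) (use Suc continuous_on_picard continuous_on_picard_iter in auto)
  thus ?case by simp
qed

definition limit_y :: "real \<Rightarrow> real" where "limit_y t = lim (\<lambda>k. iter_y k t)"
definition limit_w :: "real \<Rightarrow> real" where "limit_w t = lim (\<lambda>k. iter_w k t)"

lemma picard_iter_converges:
  assumes t: "t \<in> {\<alpha>..\<beta>}"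
  shows "(\<lambda>k. iter_y k t) \<longlonglongrightarrow> limit_y t" "(\<lambda>k. iter_w k t) \<longlonglongrightarrow> limit_w t"
proof -
  have "summable (\<lambda>k. 2 * M * (\<beta> - \<alpha>) * (1/2::real) ^ k)"
    by (intro summable_mult summable_geometric) simp
  hence geometric: "summable (\<lambda>k. 2 * M * (\<beta> - \<alpha>) / 2 ^ k)"
    by (simp add: power_one_over)
  have "norm (iter_y (Suc k) t - iter_y k t) \<le> 2 * M * (\<beta> - \<alpha>) / 2 ^ k"
    "norm (iter_w (Suc k) t - iter_w k t) \<le> 2 * M * (\<beta> - \<alpha>) / 2 ^ k" for k
    using picard_iter_step_le[OF t, of k] by simp_all
  hence "summable (\<lambda>k. iter_y (Suc k) t - iter_y k t)" "summable (\<lambda>k. iter_w (Suc k) t - iter_w k t)"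
    by (auto intro: summable_comparison_test[OF _ geometric])
  hence "convergent (\<lambda>k. iter_y k t)" "convergent (\<lambda>k. iter_w k t)"
    by (simp_all add: convergent_if_summable_differences)
  thus "(\<lambda>k. iter_y k t) \<longlonglongrightarrow> limit_y t" "(\<lambda>k. iter_w k t) \<longlonglongrightarrow> limit_w t"
    unfolding limit_y_def limit_w_def by (simp_all add: convergent_LIMSEQ_iff)
qed

lemma picard_iter_integral_converges:
  fixes h :: "real \<Rightarrow> real \<Rightarrow> real \<Rightarrow> real"
  assumes lip: "\<And>s y w y' w'. \<bar>h s y w - h s y' w'\<bar> \<le> L * (\<bar>y - y'\<bar> + \<bar>w - w'\<bar>)"
    and bnd: "\<And>s y w. \<bar>h s y w\<bar> \<le> M"
    and hc: "\<And>y w. continuous_on {\<alpha>..\<beta>} y \<Longrightarrow> continuous_on {\<alpha>..\<beta>} w \<Longrightarrow>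
                  continuous_on {\<alpha>..\<beta>} (\<lambda>t. h t (y t) (w t))"
    and t: "t \<in> {\<alpha>..\<beta>}"
  shows "(\<lambda>s. h s (limit_y s) (limit_w s)) integrable_on {t..\<beta>}"
    "(\<lambda>k. integral {t..\<beta>} (\<lambda>s. h s (iter_y k s) (iter_w k s)))
        \<longlonglongrightarrow> integral {t..\<beta>} (\<lambda>s. h s (limit_y s) (limit_w s))"
proof -
  have sub: "{t..\<beta>} \<subseteq> {\<alpha>..\<beta>}" using t by auto
  have conv: "(\<lambda>k. h s (iter_y k s) (iter_w k s)) \<longlonglongrightarrow> h s (limit_y s) (limit_w s)"
    if "s \<in> {t..\<beta>}" for s
  proof -
    have "(\<lambda>k. L * (\<bar>iter_y k s - limit_y s\<bar> + \<bar>iter_w k s - limit_w s\<bar>))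
        \<longlonglongrightarrow> L * (\<bar>limit_y s - limit_y s\<bar> + \<bar>limit_w s - limit_w s\<bar>)"
      using that sub by (intro tendsto_intros picard_iter_converges) auto
    hence "(\<lambda>k. L * (\<bar>iter_y k s - limit_y s\<bar> + \<bar>iter_w k s - limit_w s\<bar>)) \<longlonglongrightarrow> 0"
      by simp
    hence "(\<lambda>k. h s (iter_y k s) (iter_w k s) - h s (limit_y s) (limit_w s)) \<longlonglongrightarrow> 0"
      by (rule Lim_null_comparison[rotated]) (auto intro!: always_eventually lip)
    thus ?thesis by (simp add: LIM_zero_iff)
  qed
  have int: "(\<lambda>s. h s (iter_y k s) (iter_w k s)) integrable_on {t..\<beta>}" for k
    by (intro integrable_continuous_real continuous_on_subset[OF hc sub])
       (use continuous_on_picard_iter in auto)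
  show "(\<lambda>s. h s (limit_y s) (limit_w s)) integrable_on {t..\<beta>}"
    "(\<lambda>k. integral {t..\<beta>} (\<lambda>s. h s (iter_y k s) (iter_w k s)))
        \<longlonglongrightarrow> integral {t..\<beta>} (\<lambda>s. h s (limit_y s) (limit_w s))"
    using dominated_convergence[of "\<lambda>k s. h s (iter_y k s) (iter_w k s)" "{t..\<beta>}" "\<lambda>_. M"
        "\<lambda>s. h s (limit_y s) (limit_w s)", OF int integrable_const_ivl _ conv]
    by (auto simp: bnd)
qed

lemma picard_limit_fixed_point:
  assumes t: "t \<in> {\<alpha>..\<beta>}"
  shows "(\<lambda>s. f s (limit_y s) (limit_w s)) integrable_on {t..\<beta>}" "limit_y t = picard_y limit_y limit_w t"
    "(\<lambda>s. g s (limit_y s) (limit_w s)) integrable_on {t..\<beta>}" "limit_w t = picard_w limit_y limit_w t"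
proof -
  have F: "(\<lambda>s. f s (limit_y s) (limit_w s)) integrable_on {t..\<beta>}"
    "(\<lambda>k. integral {t..\<beta>} (\<lambda>s. f s (iter_y k s) (iter_w k s)))
        \<longlonglongrightarrow> integral {t..\<beta>} (\<lambda>s. f s (limit_y s) (limit_w s))"
    by (rule picard_iter_integral_converges[where h=f, OF f_lipschitz f_bounded _ t], erule (1) f_continuous)+
  have G: "(\<lambda>s. g s (limit_y s) (limit_w s)) integrable_on {t..\<beta>}"
    "(\<lambda>k. integral {t..\<beta>} (\<lambda>s. g s (iter_y k s) (iter_w k s)))
        \<longlonglongrightarrow> integral {t..\<beta>} (\<lambda>s. g s (limit_y s) (limit_w s))"
    by (rule picard_iter_integral_converges[where h=g, OF g_lipschitz g_bounded _ t], erule (1) g_continuous)+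
  show "(\<lambda>s. f s (limit_y s) (limit_w s)) integrable_on {t..\<beta>}"
    "(\<lambda>s. g s (limit_y s) (limit_w s)) integrable_on {t..\<beta>}" by (fact F(1) G(1))+
  have "(\<lambda>k. y0 - integral {t..\<beta>} (\<lambda>s. f s (iter_y k s) (iter_w k s)))
      \<longlonglongrightarrow> y0 - integral {t..\<beta>} (\<lambda>s. f s (limit_y s) (limit_w s))"
    by (intro tendsto_diff tendsto_const F(2))
  hence "(\<lambda>k. iter_y (Suc k) t) \<longlonglongrightarrow> picard_y limit_y limit_w t"
    by (simp only: picard_iter.simps fst_conv snd_conv picard_y_def)
  thus "limit_y t = picard_y limit_y limit_w t"
    by (rule LIMSEQ_unique[OF LIMSEQ_Suc[OF picard_iter_converges(1)[OF t]]])
  have "(\<lambda>k. w0 - integral {t..\<beta>} (\<lambda>s. g s (iter_y k s) (iter_w k s)))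
      \<longlonglongrightarrow> w0 - integral {t..\<beta>} (\<lambda>s. g s (limit_y s) (limit_w s))"
    by (intro tendsto_diff tendsto_const G(2))
  hence "(\<lambda>k. iter_w (Suc k) t) \<longlonglongrightarrow> picard_w limit_y limit_w t"
    by (simp only: picard_iter.simps fst_conv snd_conv picard_w_def)
  thus "limit_w t = picard_w limit_y limit_w t"
    by (rule LIMSEQ_unique[OF LIMSEQ_Suc[OF picard_iter_converges(2)[OF t]]])
qed

lemma continuous_on_picard_limit:
  "continuous_on {\<alpha>..\<beta>} limit_y" "continuous_on {\<alpha>..\<beta>} limit_w"
proof -
  have "continuous_on {\<alpha>..\<beta>} (picard_y limit_y limit_w)" "continuous_on {\<alpha>..\<beta>} (picard_w limit_y limit_w)"
    unfolding picard_y_def picard_w_def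
    using indefinite_integral_continuous_1'[OF picard_limit_fixed_point(1)[of \<alpha>]]
      indefinite_integral_continuous_1'[OF picard_limit_fixed_point(3)[of \<alpha>]] interval
    by (auto intro!: continuous_intros)
  thus "continuous_on {\<alpha>..\<beta>} limit_y" "continuous_on {\<alpha>..\<beta>} limit_w"
    using picard_limit_fixed_point(2,4) by (auto intro: continuous_on_eq)
qed

theorem picard_pair_solution:
  "\<exists>y w. y \<beta> = y0 \<and> w \<beta> = w0 \<and> (\<forall>t\<in>{\<alpha>..\<beta>}.
      (y has_real_derivative f t (y t) (w t)) (at t within {\<alpha>..\<beta>})
    \<and> (w has_real_derivative g t (y t) (w t)) (at t within {\<alpha>..\<beta>})
    \<and> \<bar>y t - y0\<bar> \<le> M * (\<beta> - t) \<and> \<bar>w t - w0\<bar> \<le> M * (\<beta> - t))"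
proof -
  note cont = continuous_on_picard_limit
  note fixed = picard_limit_fixed_point(2,4)
  have "limit_y \<beta> = y0" "limit_w \<beta> = w0"
    using fixed[of \<beta>] interval by (simp_all add: picard_y_def picard_w_def)
  moreover have "(limit_y has_real_derivative f t (limit_y t) (limit_w t)) (at t within {\<alpha>..\<beta>})
    \<and> (limit_w has_real_derivative g t (limit_y t) (limit_w t)) (at t within {\<alpha>..\<beta>})
    \<and> \<bar>limit_y t - y0\<bar> \<le> M * (\<beta> - t) \<and> \<bar>limit_w t - w0\<bar> \<le> M * (\<beta> - t)"
    if t: "t \<in> {\<alpha>..\<beta>}" for t
  proof (intro conjI)
    show "(limit_y has_real_derivative f t (limit_y t) (limit_w t)) (at t within {\<alpha>..\<beta>})"
      using has_real_derivative_picard(1)[OF cont t]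
      by (rule has_field_derivative_transform_within[OF _ zero_less_one t]) (auto simp: fixed)
    show "(limit_w has_real_derivative g t (limit_y t) (limit_w t)) (at t within {\<alpha>..\<beta>})"
      using has_real_derivative_picard(2)[OF cont t]
      by (rule has_field_derivative_transform_within[OF _ zero_less_one t]) (auto simp: fixed)
    show "\<bar>limit_y t - y0\<bar> \<le> M * (\<beta> - t)" "\<bar>limit_w t - w0\<bar> \<le> M * (\<beta> - t)"
      using picard_near_initial[OF cont t] fixed[OF t] by simp_all
  qed
  ultimately show ?thesis by blast
qed

end

lemma lipschitz_cross_terms_bound:
  fixes p q A B L :: real
  assumes "0 \<le> L" "\<bar>A\<bar> \<le> L * (\<bar>p\<bar> + \<bar>q\<bar>)" "\<bar>B\<bar> \<le> L * (\<bar>p\<bar> + \<bar>q\<bar>)"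
  shows "0 \<le> 2 * p * A + 2 * q * B + 4 * L * (p\<^sup>2 + q\<^sup>2)"
proof -
  have "\<bar>p\<bar> * \<bar>A\<bar> + \<bar>q\<bar> * \<bar>B\<bar> \<le> L * (\<bar>p\<bar> + \<bar>q\<bar>)\<^sup>2"
    using mult_left_mono[OF assms(2), of "\<bar>p\<bar>"] mult_left_mono[OF assms(3), of "\<bar>q\<bar>"]
    by (simp add: power2_eq_square algebra_simps)
  also have "\<dots> \<le> 2 * L * (p\<^sup>2 + q\<^sup>2)"
    using mult_left_mono[OF sum_squares_bound[of "\<bar>p\<bar>" "\<bar>q\<bar>"] \<open>0 \<le> L\<close>]
    by (simp add: power2_eq_square algebra_simps)
  finally show ?thesis
    using abs_ge_minus_self[of "p * A"] abs_ge_minus_self[of "q * B"] by (simp add: abs_mult)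
qed

lemma pair_ode_backward_unique:
  fixes yA wA yB wB aA bA aB bB :: "real \<Rightarrow> real"
  assumes "0 \<le> L"
    and d1: "\<And>t. t \<in> {\<alpha>..\<beta>} \<Longrightarrow> (yA has_real_derivative aA t) (at t within {\<alpha>..\<beta>})"
    and d2: "\<And>t. t \<in> {\<alpha>..\<beta>} \<Longrightarrow> (wA has_real_derivative bA t) (at t within {\<alpha>..\<beta>})"
    and d3: "\<And>t. t \<in> {\<alpha>..\<beta>} \<Longrightarrow> (yB has_real_derivative aB t) (at t within {\<alpha>..\<beta>})"
    and d4: "\<And>t. t \<in> {\<alpha>..\<beta>} \<Longrightarrow> (wB has_real_derivative bB t) (at t within {\<alpha>..\<beta>})"
    and lip_a: "\<And>t. t \<in> {\<alpha>..\<beta>} \<Longrightarrow> \<bar>aA t - aB t\<bar> \<le> L * (\<bar>yA t - yB t\<bar> + \<bar>wA t - wB t\<bar>)"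
    and lip_b: "\<And>t. t \<in> {\<alpha>..\<beta>} \<Longrightarrow> \<bar>bA t - bB t\<bar> \<le> L * (\<bar>yA t - yB t\<bar> + \<bar>wA t - wB t\<bar>)"
    and "yA \<beta> = yB \<beta>" "wA \<beta> = wB \<beta>"
    and t: "t \<in> {\<alpha>..\<beta>}"
  shows "yA t = yB t \<and> wA t = wB t"
proof -
  define e where "e s = (yA s - yB s)^2 + (wA s - wB s)^2" for s
  define e' where "e' s = (2 * (yA s - yB s) * (aA s - aB s) + 2 * (wA s - wB s) * (bA s - bB s) + 4 * L * e s)
                       * exp (4 * L * s)" for s
  txt \<open>The weighted energy \<open>e(s) exp(4Ls)\<close> is nondecreasing and vanishes at \<open>\<beta>\<close>.\<close>
  have dE: "((\<lambda>s. e s * exp (4 * L * s)) has_real_derivative e' s) (at s within {\<alpha>..\<beta>})"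
    if "s \<in> {\<alpha>..\<beta>}" for s
    unfolding e_def e'_def
    by (rule derivative_eq_intros d1 d2 d3 d4 refl that)+ (simp add: algebra_simps power2_eq_square)
  have e'_nonneg: "0 \<le> e' s" if "s \<in> {\<alpha>..\<beta>}" for s
    using lipschitz_cross_terms_bound[OF \<open>0 \<le> L\<close> lip_a[OF that] lip_b[OF that]]
    by (simp add: e_def e'_def)
  have cont: "continuous_on {\<alpha>..\<beta>} (\<lambda>s. e s * exp (4 * L * s))"
    using dE by (meson DERIV_continuous continuous_on_eq_continuous_within)
  have "e t * exp (4 * L * t) \<le> e \<beta> * exp (4 * L * \<beta>)"
  proof (rule DERIV_nonneg_imp_increasing_open[of t \<beta>])
    show "t \<le> \<beta>" "continuous_on {t..\<beta>} (\<lambda>s. e s * exp (4 * L * s))"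
      using t by (auto intro: continuous_on_subset[OF cont])
    fix x assume x: "t < x" "x < \<beta>"
    hence "at x within {\<alpha>..\<beta>} = at x" using t by (intro at_within_Icc_at) auto
    thus "\<exists>y. ((\<lambda>s. e s * exp (4 * L * s)) has_real_derivative y) (at x) \<and> 0 \<le> y"
      using dE[of x] e'_nonneg[of x] x t by auto
  qed
  hence "e t \<le> 0" using \<open>yA \<beta> = yB \<beta>\<close> \<open>wA \<beta> = wB \<beta>\<close> by (simp add: e_def mult_le_0_iff)
  thus ?thesis unfolding e_def by (smt (verit) sum_power2_eq_zero_iff zero_le_power2)
qed

section \<open>Consequences of the integral identity\<close>

lemma inner_integrand_nonneg:
  assumes "0 \<le> t" "t \<le> s" "0 < u s"
  shows "0 \<le> inner_integrand u u' t s"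
  unfolding inner_integrand_def exp_weight_def using assms
  by (intro mult_nonneg_nonneg divide_nonneg_pos) (auto simp: add_nonneg_nonneg)

lemma has_integral_exp_neg_integral:
  fixes h :: "real \<Rightarrow> real"
  assumes "t \<le> b" "continuous_on {t..b} h"
  shows "((\<lambda>s. exp (- c * integral {t..s} h) * (c * h s)) has_integral
           1 - exp (- c * integral {t..b} h)) {t..b}"
proof -
  have "((\<lambda>s. - exp (- c * integral {t..s} h)) has_real_derivative
          exp (- c * integral {t..s} h) * (c * h s)) (at s within {t..b})" if "s \<in> {t..b}" for s
    using assms that by (auto intro!: derivative_eq_intros integral_has_real_derivative)
  from fundamental_theorem_of_calculus[OF assms(1) this[unfolded has_real_derivative_iff_has_vector_derivative]]
  show ?thesis by simp
qed

lemma inner_integral_le: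
  assumes "0 \<le> d" "0 < \<sigma>" "d < t"
    and above_line: "\<And>s. d < s \<Longrightarrow> \<sigma> * s \<le> u s"
    and u'_cont: "\<And>s. d < s \<Longrightarrow> isCont u' s"
    and integrable: "inner_integrand u u' t integrable_on {t..}"
  shows "inner_integral u u' t \<le> 1 / (\<sigma> * t)"
proof -
  have t0: "0 < t" using assms by simp
  have st: "0 < \<sigma> * t" using assms by simp
  have u_ge: "\<sigma> * t \<le> u s" if "t \<le> s" for s
    using above_line[of s] that assms by (smt (verit) mult_left_mono)
  define h where "h z = z * (1 + (u' z)\<^sup>2)" for z
  define G where "G s = exp (- (1/2) * integral {t..s} h) * ((1/2) * h s)" for s
  have integrand_eq: "inner_integrand u u' t s = G s / u s" for s
    unfolding inner_integrand_def exp_weight_def G_def h_def by (simp add: field_simps)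
  show ?thesis unfolding inner_integral_def
  proof (rule integral_le_if_partial_integrals_le[OF integrable])
    show "0 \<le> inner_integrand u u' t s" if "t \<le> s" for s
      using t0 that u_ge[OF that] st by (intro inner_integrand_nonneg) auto
  next
    fix b assume "t \<le> b"
    have "continuous_on {t..b} h"
      unfolding h_def using assms u'_cont
      by (intro continuous_at_imp_continuous_on ballI) (auto intro!: continuous_intros)
    from has_integral_exp_neg_integral[OF \<open>t \<le> b\<close> this, of "1/2"]
    have ftc: "(G has_integral 1 - exp (- (1/2) * integral {t..b} h)) {t..b}"
      by (simp add: G_def[abs_def])
    have "integral {t..b} (inner_integrand u u' t) \<le> integral {t..b} (\<lambda>s. (1 / (\<sigma> * t)) * G s)"
    proof (rule integral_le)
      show "inner_integrand u u' t integrable_on {t..b}"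
        using integrable_on_subcbox[OF integrable, of t b] by simp
      show "(\<lambda>s. 1 / (\<sigma> * t) * G s) integrable_on {t..b}"
        using integrable_on_cmult_left[of G "{t..b}" "1 / (\<sigma> * t)"] ftc by (auto simp: integrable_on_def)
      fix s assume s: "s \<in> {t..b}"
      have "0 \<le> G s" using s t0 by (simp add: G_def h_def add_nonneg_nonneg)
      hence "G s / u s \<le> G s / (\<sigma> * t)"
        using u_ge[of s] s st by (intro divide_left_mono) auto
      thus "inner_integrand u u' t s \<le> 1 / (\<sigma> * t) * G s" unfolding integrand_eq by simp
    qed
    also have "\<dots> = (1 / (\<sigma> * t)) * (1 - exp (- (1/2) * integral {t..b} h))"
      using integral_unique[OF ftc] by simp
    also have "\<dots> \<le> 1 / (\<sigma> * t)" using assms t0 by (simp add: divide_right_mono)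
    finally show "integral {t..b} (inner_integrand u u' t) \<le> 1 / (\<sigma> * t)" .
  qed
qed

lemma tail_integral_le:
  fixes h :: "real \<Rightarrow> real"
  assumes "0 < x" and integrable: "h integrable_on {x..}"
    and h_nonneg: "\<And>t. x \<le> t \<Longrightarrow> 0 \<le> h t" and h_le: "\<And>t. x \<le> t \<Longrightarrow> h t \<le> c / t ^ 3"
  shows "integral {x..} h \<le> c / (2 * x\<^sup>2)"
proof (rule integral_le_if_partial_integrals_le[OF integrable h_nonneg])
  have "0 \<le> c / x ^ 3" using h_nonneg[of x] h_le[of x] by fastforce
  hence c_nonneg: "0 \<le> c" using \<open>0 < x\<close> by (simp add: zero_le_divide_iff)
  fix b assume xb: "x \<le> b"
  have ftc: "((\<lambda>t. c / t ^ 3) has_integral (- c / (2 * b\<^sup>2) - - c / (2 * x\<^sup>2))) {x..b}"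
  proof (rule fundamental_theorem_of_calculus[OF xb])
    fix t assume "t \<in> {x..b}"
    hence "0 < t" using \<open>0 < x\<close> by simp
    hence "((\<lambda>t. - c / (2 * t\<^sup>2)) has_real_derivative c / t ^ 3) (at t within {x..b})"
      by (auto intro!: derivative_eq_intros simp: field_simps power2_eq_square power3_eq_cube)
    thus "((\<lambda>t. - c / (2 * t\<^sup>2)) has_vector_derivative c / t ^ 3) (at t within {x..b})"
      by (simp add: has_real_derivative_iff_has_vector_derivative)
  qed
  have "integral {x..b} h \<le> integral {x..b} (\<lambda>t. c / t ^ 3)"
    using integrable_on_subcbox[OF integrable, of x b] ftc h_le
    by (intro integral_le) (auto simp: integrable_on_def)
  also have "\<dots> = c / (2 * x\<^sup>2) - c / (2 * b\<^sup>2)" using integral_unique[OF ftc] by simp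
  also have "\<dots> \<le> c / (2 * x\<^sup>2)" using c_nonneg by simp
  finally show "integral {x..b} h \<le> c / (2 * x\<^sup>2)" .
qed

lemma tail_integral_diff_bounds:
  fixes h :: "real \<Rightarrow> real"
  assumes "0 < x" "x < y" and integrable: "h integrable_on {x..}" "h integrable_on {y..}"
    and h_nonneg: "\<And>t. x \<le> t \<Longrightarrow> 0 \<le> h t" and h_le: "\<And>t. x \<le> t \<Longrightarrow> h t \<le> c / t ^ 3"
  shows "0 \<le> integral {x..} h - integral {y..} h \<and> integral {x..} h - integral {y..} h \<le> (y - x) * c / x ^ 3"
proof -
  have int_xy: "h integrable_on {x..y}"
    using integrable_on_subcbox[OF integrable(1), of x y] by simp
  have "(h has_integral (integral {x..y} h + integral {y..} h)) ({x..y} \<union> {y..})"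
    using int_xy integrable(2) \<open>x < y\<close> by (intro has_integral_Un) auto
  moreover have "{x..y} \<union> {y..} = {x..}" using \<open>x < y\<close> by auto
  ultimately have split: "integral {x..} h - integral {y..} h = integral {x..y} h"
    by (simp add: integral_unique)
  have "integral {x..y} h \<le> integral {x..y} (\<lambda>t. c / x ^ 3)"
  proof (rule integral_le[OF int_xy])
    fix t assume t: "t \<in> {x..y}"
    have "0 \<le> c / x ^ 3" using h_nonneg[of x] h_le[of x] by fastforce
    hence "0 \<le> c" using \<open>0 < x\<close> by (simp add: zero_le_divide_iff)
    hence "c / t ^ 3 \<le> c / x ^ 3" using t \<open>0 < x\<close> by (intro divide_left_mono power_mono) auto
    thus "h t \<le> c / x ^ 3" using h_le[of t] t by simp
  qed auto
  moreover have "0 \<le> integral {x..y} h"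
    using int_xy h_nonneg by (intro integral_nonneg) auto
  ultimately show ?thesis using \<open>x < y\<close> by (simp add: split)
qed

lemma derivative_bounds_from_right_quotients:
  fixes f :: "real \<Rightarrow> real"
  assumes "(f has_real_derivative D) (at s)"
    and "\<And>y. s < y \<Longrightarrow> lo \<le> (f y - f s) / (y - s) \<and> (f y - f s) / (y - s) \<le> hi"
  shows "lo \<le> D" "D \<le> hi"
proof -
  have lim: "((\<lambda>y. (f y - f s) / (y - s)) \<longlongrightarrow> D) (at_right s)"
    using assms(1) unfolding has_field_derivative_iff by (rule tendsto_within_subset) auto
  have "\<forall>\<^sub>F y in at_right s. lo \<le> (f y - f s) / (y - s) \<and> (f y - f s) / (y - s) \<le> hi"
    using assms(2) by (auto intro: eventually_mono[OF eventually_at_right_less])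
  thus "lo \<le> D" "D \<le> hi"
    by (auto intro: tendsto_lowerbound[OF lim] tendsto_upperbound[OF lim] elim: eventually_mono)
qed

text \<open>The difference quotients of \<open>u(x)/x = \<sigma> + k F(x)\<close> to the right of \<open>s\<close> lie in
  \<open>[-kc/s\<^sup>3, 0]\<close>, and \<open>u' - \<sigma> = s (u/x)'(s) + k F(s)\<close>.\<close>
lemma slope_bounds_from_tail:
  fixes u F :: "real \<Rightarrow> real"
  assumes "0 < s" and deriv: "(u has_real_derivative Du) (at s)"
    and u_eq: "\<And>x. s \<le> x \<Longrightarrow> u x = x * (\<sigma> + k * F x)" and "0 \<le> k"
    and F_nonneg: "0 \<le> F s" and F_le: "F s \<le> c / (2 * s\<^sup>2)"
    and F_decrease: "\<And>y. s < y \<Longrightarrow> 0 \<le> F s - F y \<and> F s - F y \<le> (y - s) * c / s ^ 3"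
  shows "0 \<le> u s - \<sigma> * s" "u s - \<sigma> * s \<le> k * c / (2 * s)"
    "- (k * c / s\<^sup>2) \<le> Du - \<sigma>" "Du - \<sigma> \<le> k * c / (2 * s\<^sup>2)"
    "- (k * c / s) \<le> s * Du - u s" "s * Du - u s \<le> 0"
proof -
  define D where "D = (Du * s - u s) / s\<^sup>2"
  have deriv_quotient: "((\<lambda>x. u x / x) has_real_derivative D) (at s)"
    unfolding D_def using deriv \<open>0 < s\<close>
    by (auto intro!: derivative_eq_intros simp: power2_eq_square)
  have quotient: "- (k * c / s ^ 3) \<le> (u y / y - u s / s) / (y - s)
      \<and> (u y / y - u s / s) / (y - s) \<le> 0" if "s < y" for y
  proof -
    have "(u y / y - u s / s) / (y - s) = - (k * ((F s - F y) / (y - s)))"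
      using u_eq[of y] u_eq[of s] that \<open>0 < s\<close> by (simp add: field_simps)
    moreover have "0 \<le> (F s - F y) / (y - s)" "(F s - F y) / (y - s) \<le> c / s ^ 3"
      using F_decrease[OF that] that by (auto simp: pos_divide_le_eq mult.commute)
    hence "0 \<le> k * ((F s - F y) / (y - s))" "k * ((F s - F y) / (y - s)) \<le> k * (c / s ^ 3)"
      using \<open>0 \<le> k\<close> by (metis mult_nonneg_nonneg, metis mult_left_mono)
    ultimately show ?thesis by simp
  qed
  note D_bounds = derivative_bounds_from_right_quotients[OF deriv_quotient quotient]
  have kF: "0 \<le> k * F s" "k * F s \<le> k * c / (2 * s\<^sup>2)"
    using F_nonneg F_le \<open>0 \<le> k\<close> mult_left_mono[OF F_le \<open>0 \<le> k\<close>] by simp_all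
  have us: "u s = s * (\<sigma> + k * F s)" using u_eq[of s] by simp
  have slope: "s * Du - u s = s\<^sup>2 * D" and Du: "Du - \<sigma> = s * D + k * F s"
    using \<open>0 < s\<close> unfolding D_def us by (simp_all add: field_simps power2_eq_square)
  have sD: "- (k * c / s\<^sup>2) \<le> s * D" "s * D \<le> 0"
    using mult_left_mono[OF D_bounds(1), of s] D_bounds(2) \<open>0 < s\<close>
    by (simp_all add: power2_eq_square power3_eq_cube mult_nonneg_nonpos)
  have ssD: "- (k * c / s) \<le> s\<^sup>2 * D"
    using mult_left_mono[OF D_bounds(1), of "s\<^sup>2"] \<open>0 < s\<close> by (simp add: power2_eq_square power3_eq_cube)
  show "0 \<le> u s - \<sigma> * s" using mult_nonneg_nonneg[OF _ kF(1), of s] \<open>0 < s\<close> unfolding us by (simp add: algebra_simps)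
  show "u s - \<sigma> * s \<le> k * c / (2 * s)"
    using mult_left_mono[OF kF(2), of s] \<open>0 < s\<close> unfolding us by (simp add: algebra_simps power2_eq_square)
  show "- (k * c / s\<^sup>2) \<le> Du - \<sigma>" "Du - \<sigma> \<le> k * c / (2 * s\<^sup>2)"
    using sD kF unfolding Du by linarith+
  show "- (k * c / s) \<le> s * Du - u s" "s * Du - u s \<le> 0"
    using ssD D_bounds(2) \<open>0 < s\<close> unfolding slope by (simp_all add: mult_nonneg_nonpos)
qed

lemma integral_identity_weight_bounds:
  fixes n :: nat and d \<sigma> :: real and u u' u'' :: "real \<Rightarrow> real"
  assumes "n \<ge> 1" and "d \<ge> 0" and "\<sigma> > 0"
    and sol: "ode_solution_on n {d<..} u u' u''"
    and inner_int: "\<forall>t>d. inner_integrand u u' t integrable_on {t..}"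
    and outer_int: "\<forall>x>d. (\<lambda>t. inner_integral u u' t / t\<^sup>2) integrable_on {x..}"
    and ident: "\<forall>x>d. u x = 2 * (real n - 1) * x
                       * integral {x..} (\<lambda>t. inner_integral u u' t / t\<^sup>2) + \<sigma> * x"
    and "d < t"
  shows "0 \<le> inner_integral u u' t / t\<^sup>2" "inner_integral u u' t / t\<^sup>2 \<le> 1 / \<sigma> / t ^ 3"
proof -
  define h where "h t = inner_integral u u' t / t\<^sup>2" for t
  have h_nonneg: "0 \<le> h t" if "d < t" for t
    unfolding h_def inner_integral_def using inner_int that assms sol
    by (intro divide_nonneg_nonneg integral_nonneg inner_integrand_nonneg) (auto simp: ode_solution_on_def)
  have above_line: "\<sigma> * x \<le> u x" if "d < x" for x
  proof -
    have "0 \<le> integral {x..} h"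
      using outer_int that h_nonneg unfolding h_def[abs_def] by (intro integral_nonneg) auto
    hence "0 \<le> 2 * (real n - 1) * x * integral {x..} h" using that assms by simp
    thus ?thesis using ident that unfolding h_def[abs_def] by simp
  qed
  have u'_cont: "isCont u' x" if "d < x" for x
    using sol that by (auto simp: ode_solution_on_def intro: DERIV_isCont)
  have "h t \<le> (1 / (\<sigma> * t)) / t\<^sup>2"
    unfolding h_def using inner_integral_le[of d \<sigma> t u u'] above_line u'_cont inner_int assms
    by (intro divide_right_mono) auto
  thus "inner_integral u u' t / t\<^sup>2 \<le> 1 / \<sigma> / t ^ 3" by (simp add: h_def power2_eq_square power3_eq_cube)
  show "0 \<le> inner_integral u u' t / t\<^sup>2" using h_nonneg[OF \<open>d < t\<close>] by (simp add: h_def)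
qed

lemma integral_identity_bounds:
  fixes n :: nat and d \<sigma> s :: real and u u' u'' :: "real \<Rightarrow> real"
  assumes "n \<ge> 1" and "d \<ge> 0" and "\<sigma> > 0"
    and sol: "ode_solution_on n {d<..} u u' u''"
    and inner_int: "\<forall>t>d. inner_integrand u u' t integrable_on {t..}"
    and outer_int: "\<forall>x>d. (\<lambda>t. inner_integral u u' t / t\<^sup>2) integrable_on {x..}"
    and ident: "\<forall>x>d. u x = 2 * (real n - 1) * x
                       * integral {x..} (\<lambda>t. inner_integral u u' t / t\<^sup>2) + \<sigma> * x"
    and "d < s"
  shows "0 \<le> u s - \<sigma> * s" "u s - \<sigma> * s \<le> (real n - 1) / (\<sigma> * s)"
    "- (2 * (real n - 1) / (\<sigma> * s\<^sup>2)) \<le> u' s - \<sigma>" "u' s - \<sigma> \<le> (real n - 1) / (\<sigma> * s\<^sup>2)"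
    "s * u' s \<le> u s"
proof -
  define k where "k = 2 * (real n - 1)"
  define h where "h t = inner_integral u u' t / t\<^sup>2" for t
  define F where "F x = integral {x..} h" for x
  note h_bounds = integral_identity_weight_bounds[OF assms(1-7), folded h_def]
  have k: "0 \<le> k" using \<open>n \<ge> 1\<close> by (simp add: k_def)
  have "0 < s" using assms by simp
  have h_int: "h integrable_on {x..}" if "d < x" for x
    using outer_int that unfolding h_def[abs_def] by simp
  have F_nonneg: "0 \<le> F s"
    unfolding F_def using h_int h_bounds(1) \<open>d < s\<close> by (intro integral_nonneg) auto
  have F_le: "F s \<le> 1 / \<sigma> / (2 * s\<^sup>2)"
    unfolding F_def using h_int h_bounds \<open>d < s\<close> \<open>0 < s\<close> by (intro tail_integral_le) auto
  have F_decrease: "0 \<le> F s - F y \<and> F s - F y \<le> (y - s) * (1 / \<sigma>) / s ^ 3" if "s < y" for y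
    unfolding F_def using h_int h_bounds \<open>d < s\<close> \<open>0 < s\<close> that
    by (intro tail_integral_diff_bounds) auto
  have u_eq: "u x = x * (\<sigma> + k * F x)" if "s \<le> x" for x
    using ident that \<open>d < s\<close> unfolding F_def h_def[abs_def] k_def by (simp add: algebra_simps)
  have deriv: "(u has_real_derivative u' s) (at s)" using sol assms by (simp add: ode_solution_on_def)
  have *: "k * (1 / \<sigma>) / (2 * s) = (real n - 1) / (\<sigma> * s)"
    "k * (1 / \<sigma>) / s\<^sup>2 = 2 * (real n - 1) / (\<sigma> * s\<^sup>2)"
    "k * (1 / \<sigma>) / (2 * s\<^sup>2) = (real n - 1) / (\<sigma> * s\<^sup>2)"
    using \<open>0 < s\<close> \<open>\<sigma> > 0\<close> by (simp_all add: k_def field_simps)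
  show "0 \<le> u s - \<sigma> * s" "u s - \<sigma> * s \<le> (real n - 1) / (\<sigma> * s)"
    "- (2 * (real n - 1) / (\<sigma> * s\<^sup>2)) \<le> u' s - \<sigma>" "u' s - \<sigma> \<le> (real n - 1) / (\<sigma> * s\<^sup>2)"
    "s * u' s \<le> u s"
    using slope_bounds_from_tail[OF \<open>0 < s\<close> deriv u_eq k F_nonneg F_le F_decrease]
    unfolding * by simp_all
qed

section \<open>Continuation of solutions to \<open>(0, \<infinity>)\<close>\<close>

definition ode_rhs :: "nat \<Rightarrow> real \<Rightarrow> real \<Rightarrow> real \<Rightarrow> real" where
  "ode_rhs n x y w = ((x * w - y) / 2 + (real n - 1) / y) * (1 + w\<^sup>2)"

lemma ode_solution_onD:
  assumes "ode_solution_on n I u u' u''" "x \<in> I"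
  shows "0 < u x" "(u has_real_derivative u' x) (at x)" "(u' has_real_derivative u'' x) (at x)"
    "u'' x = ode_rhs n x (u x) (u' x)"
  using assms unfolding ode_solution_on_def ode_rhs_def by auto

definition bracket_bound :: "nat \<Rightarrow> real \<Rightarrow> real \<Rightarrow> real \<Rightarrow> real \<Rightarrow> real" where
  "bracket_bound n X c C W = (X * W + C) / 2 + (real n - 1) / c"

definition rhs_lipschitz :: "nat \<Rightarrow> real \<Rightarrow> real \<Rightarrow> real \<Rightarrow> real \<Rightarrow> real" where
  "rhs_lipschitz n X c C W = (1 + W^2) * (X / 2 + 1 / 2 + (real n - 1) / c^2) + 2 * W * bracket_bound n X c C W"

lemma bracket_le:
  fixes x y w X c C W :: real
  assumes "0 \<le> x" "x \<le> X" "0 < c" "c \<le> y" "y \<le> C" "\<bar>w\<bar> \<le> W" "1 \<le> n"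
  shows "\<bar>(x * w - y) / 2 + (real n - 1) / y\<bar> \<le> bracket_bound n X c C W"
proof -
  have "\<bar>x * w\<bar> \<le> X * W" using assms by (simp add: abs_mult mult_mono)
  hence "\<bar>x * w - y\<bar> \<le> X * W + C" using assms by linarith
  moreover have "0 \<le> (real n - 1) / y" using assms by simp
  moreover have "(real n - 1) / y \<le> (real n - 1) / c" using assms by (intro divide_left_mono) auto
  moreover have "\<bar>(x * w - y) / 2 + (real n - 1) / y\<bar> \<le> \<bar>(x * w - y) / 2\<bar> + \<bar>(real n - 1) / y\<bar>"
    by (rule abs_triangle_ineq)
  moreover have "\<bar>(x * w - y) / 2\<bar> = \<bar>x * w - y\<bar> / 2" by simp
  moreover have "\<bar>(real n - 1) / y\<bar> = (real n - 1) / y" using assms by simp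
  ultimately have "\<bar>(x * w - y) / 2 + (real n - 1) / y\<bar> \<le> (X * W + C) / 2 + (real n - 1) / c"
    by (smt (verit, best) divide_right_mono)
  thus ?thesis unfolding bracket_bound_def .
qed

lemma bracket_lipschitz:
  fixes x y w y' w' X c C W :: real
  assumes "0 \<le> x" "x \<le> X" "0 < c" "c \<le> y" "c \<le> y'" "1 \<le> n"
  shows "\<bar>((x * w - y) / 2 + (real n - 1) / y) - ((x * w' - y') / 2 + (real n - 1) / y')\<bar>
         \<le> X / 2 * \<bar>w - w'\<bar> + (1/2 + (real n - 1) / c^2) * \<bar>y - y'\<bar>"
proof -
  have yy: "c^2 \<le> y * y'" using assms by (simp add: power2_eq_square mult_mono)
  have e: "((x * w - y) / 2 + (real n - 1) / y) - ((x * w' - y') / 2 + (real n - 1) / y')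
        = x * (w - w') / 2 - (y - y') / 2 + (real n - 1) * (y' - y) / (y * y')"
    using assms by (simp add: field_simps)
  have a1: "\<bar>x * (w - w') / 2\<bar> \<le> X / 2 * \<bar>w - w'\<bar>" using assms by (simp add: abs_mult mult_right_mono)
  have a2: "\<bar>(real n - 1) * (y' - y) / (y * y')\<bar> \<le> (real n - 1) / c^2 * \<bar>y - y'\<bar>"
  proof -
    have "\<bar>(real n - 1) * (y' - y) / (y * y')\<bar> = (real n - 1) * \<bar>y - y'\<bar> / (y * y')"
      using assms by (simp add: abs_mult abs_minus_commute)
    also have "\<dots> \<le> (real n - 1) * \<bar>y - y'\<bar> / c^2"
      using assms yy by (intro divide_left_mono) auto
    finally show ?thesis by simp
  qed
  have a3: "\<bar>(y - y') / 2\<bar> = 1/2 * \<bar>y - y'\<bar>" by simp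
  show ?thesis unfolding e
    using a1 a2 a3 abs_triangle_ineq[of "x * (w - w') / 2 - (y - y') / 2" "(real n - 1) * (y' - y) / (y * y')"]
      abs_triangle_ineq4[of "x * (w - w') / 2" "(y - y') / 2"]
    by (simp add: algebra_simps)
qed

lemma ode_rhs_lipschitz:
  fixes x y w y' w' X c C W :: real
  assumes "0 \<le> x" "x \<le> X" "0 < c" "c \<le> y" "y \<le> C" "c \<le> y'" "y' \<le> C" "\<bar>w\<bar> \<le> W" "\<bar>w'\<bar> \<le> W" "1 \<le> n"
  shows "\<bar>ode_rhs n x y w - ode_rhs n x y' w'\<bar> \<le> rhs_lipschitz n X c C W * (\<bar>y - y'\<bar> + \<bar>w - w'\<bar>)"
proof -
  define g where "g = (x * w - y) / 2 + (real n - 1) / y"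
  define g' where "g' = (x * w' - y') / 2 + (real n - 1) / y'"
  have W0: "0 \<le> W" using assms(8) by linarith
  have X0: "0 \<le> X" using assms by linarith
  have gl: "\<bar>g - g'\<bar> \<le> X / 2 * \<bar>w - w'\<bar> + (1/2 + (real n - 1) / c^2) * \<bar>y - y'\<bar>"
    unfolding g_def g'_def by (rule bracket_lipschitz) (use assms in auto)
  have gb: "\<bar>g'\<bar> \<le> bracket_bound n X c C W" unfolding g'_def by (rule bracket_le) (use assms in auto)
  have bracket_nonneg: "0 \<le> bracket_bound n X c C W" using gb by linarith
  have ww: "\<bar>w^2 - w'^2\<bar> \<le> 2 * W * \<bar>w - w'\<bar>"
  proof -
    have "\<bar>w^2 - w'^2\<bar> = \<bar>w + w'\<bar> * \<bar>w - w'\<bar>" by (simp add: power2_eq_square algebra_simps abs_mult[symmetric])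
    also have "\<dots> \<le> (2 * W) * \<bar>w - w'\<bar>" using assms by (intro mult_right_mono) auto
    finally show ?thesis .
  qed
  have w2: "1 + w^2 \<le> 1 + W^2" using assms by (simp add: abs_le_square_iff[symmetric])
  have e: "ode_rhs n x y w - ode_rhs n x y' w' = (g - g') * (1 + w^2) + g' * (w^2 - w'^2)"
    using assms unfolding ode_rhs_def g_def g'_def by (simp add: field_simps power2_eq_square)
  have t1: "\<bar>(g - g') * (1 + w^2)\<bar> \<le> (X / 2 * \<bar>w - w'\<bar> + (1/2 + (real n - 1) / c^2) * \<bar>y - y'\<bar>) * (1 + W^2)"
    unfolding abs_mult using gl w2 by (intro mult_mono) auto
  have t2: "\<bar>g' * (w^2 - w'^2)\<bar> \<le> bracket_bound n X c C W * (2 * W * \<bar>w - w'\<bar>)"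
    unfolding abs_mult using gb ww by (intro mult_mono) auto
  have c0: "0 \<le> (real n - 1) / c^2" using assms by simp
  have "\<bar>ode_rhs n x y w - ode_rhs n x y' w'\<bar> \<le> (X / 2 * \<bar>w - w'\<bar> + (1/2 + (real n - 1) / c^2) * \<bar>y - y'\<bar>) * (1 + W^2)
        + bracket_bound n X c C W * (2 * W * \<bar>w - w'\<bar>)"
    unfolding e using t1 t2 abs_triangle_ineq[of "(g - g') * (1 + w^2)" "g' * (w^2 - w'^2)"] by linarith
  also have "\<dots> \<le> rhs_lipschitz n X c C W * (\<bar>y - y'\<bar> + \<bar>w - w'\<bar>)"
  proof -
    define K where "K = (real n - 1) / c^2"
    have "0 \<le> (1 + W^2) * (X / 2 * \<bar>y - y'\<bar> + (1/2 + K) * \<bar>w - w'\<bar>)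
               + 2 * W * bracket_bound n X c C W * \<bar>y - y'\<bar>"
      using X0 W0 bracket_nonneg c0 unfolding K_def by (intro add_nonneg_nonneg mult_nonneg_nonneg) auto
    thus ?thesis unfolding rhs_lipschitz_def K_def[symmetric] by (simp add: algebra_simps add_divide_distrib)
  qed
  finally show ?thesis .
qed

lemma ode_rhs_le:
  fixes x y w X c C W :: real
  assumes "0 \<le> x" "x \<le> X" "0 < c" "c \<le> y" "y \<le> C" "\<bar>w\<bar> \<le> W" "1 \<le> n"
  shows "\<bar>ode_rhs n x y w\<bar> \<le> bracket_bound n X c C W * (1 + W^2)"
proof -
  have W0: "0 \<le> W" using assms by linarith
  have gb: "\<bar>(x * w - y) / 2 + (real n - 1) / y\<bar> \<le> bracket_bound n X c C W" by (rule bracket_le) (use assms in auto)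
  have w2: "1 + w^2 \<le> 1 + W^2" using assms W0 by (metis abs_le_square_iff abs_of_nonneg add_le_cancel_left)
  show ?thesis unfolding ode_rhs_def abs_mult using gb w2 by (intro mult_mono) auto
qed




lemma bracket_bound_nonneg: "0 \<le> X \<Longrightarrow> 0 \<le> W \<Longrightarrow> 0 \<le> C \<Longrightarrow> 0 < c \<Longrightarrow> 1 \<le> n \<Longrightarrow> 0 \<le> bracket_bound n X c C W"
  unfolding bracket_bound_def by simp

lemma rhs_lipschitz_nonneg:
  "0 \<le> X \<Longrightarrow> 0 \<le> W \<Longrightarrow> 0 \<le> C \<Longrightarrow> 0 < c \<Longrightarrow> 1 \<le> n \<Longrightarrow> 0 \<le> rhs_lipschitz n X c C W"
  unfolding rhs_lipschitz_def using bracket_bound_nonneg[of X W C c n]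
  by (intro add_nonneg_nonneg mult_nonneg_nonneg) auto

lemma ode_slope_defect_nonpos:
  assumes "n \<ge> 2" and sol: "ode_solution_on n {a<..} V V' V''"
    and "a < e" "0 < e" and end_nonpos: "x0 * V' x0 \<le> V x0" and t: "t \<in> {e..x0}"
  shows "t * V' t \<le> V t"
proof -
  have "t * V' t - V t \<le> 0"
  proof (rule nonpos_if_upcrossing[of e x0 "\<lambda>s. s * V' s - V s" "\<lambda>s. s * V'' s"])
    fix s assume s: "s \<in> {e..x0}"
    hence "s \<in> {a<..}" using assms by auto
    note S = ode_solution_onD[OF sol this]
    show "((\<lambda>s. s * V' s - V s) has_real_derivative s * V'' s) (at s)"
      using S(2,3) by (auto intro!: derivative_eq_intros)
    assume "s * V' s - V s = 0"
    hence "V'' s = (real n - 1) / V s * (1 + (V' s)\<^sup>2)" using S(4) by (simp add: ode_rhs_def)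
    moreover have "0 < (real n - 1) / V s * (1 + (V' s)\<^sup>2)"
      using S(1) assms by (simp add: add_pos_nonneg)
    ultimately have "0 < V'' s" by simp
    thus "0 < s * V'' s" using s assms by simp
  qed (use end_nonpos t in auto)
  thus ?thesis by simp
qed

lemma ode_slope_defect_lower:
  assumes "n \<ge> 2" and sol: "ode_solution_on n {a<..} V V' V''"
    and "a < e" "0 < e" "0 < m" and above: "\<And>s. s \<in> {e..x0} \<Longrightarrow> m \<le> V s"
    and k: "2 * (real n - 1) / m < k" and end_ge: "- k \<le> x0 * V' x0 - V x0" and t: "t \<in> {e..x0}"
  shows "- k \<le> t * V' t - V t"
proof -
  have "- k - (t * V' t - V t) \<le> 0"
  proof (rule nonpos_if_upcrossing[of e x0 "\<lambda>s. - k - (s * V' s - V s)" "\<lambda>s. - (s * V'' s)"])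
    fix s assume s: "s \<in> {e..x0}"
    hence "s \<in> {a<..}" using assms by auto
    note S = ode_solution_onD[OF sol this]
    show "((\<lambda>s. - k - (s * V' s - V s)) has_real_derivative - (s * V'' s)) (at s)"
      using S(2,3) by (auto intro!: derivative_eq_intros)
    assume "- k - (s * V' s - V s) = 0"
    hence "V'' s = (- k / 2 + (real n - 1) / V s) * (1 + (V' s)\<^sup>2)"
      using S(4) by (simp add: ode_rhs_def)
    moreover have "(real n - 1) / V s \<le> (real n - 1) / m"
      using above[OF s] assms by (intro divide_left_mono) auto
    hence "- k / 2 + (real n - 1) / V s < 0" using k by linarith
    ultimately have "V'' s < 0" by (simp add: mult_neg_pos add_pos_nonneg)
    thus "0 < - (s * V'' s)" using s assms by (simp add: mult_pos_neg)
  qed (use end_ge t in auto)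
  thus ?thesis by simp
qed

lemma quotient_ge_if_slope_defect_nonpos:
  fixes V V' :: "real \<Rightarrow> real"
  assumes "0 < e" and deriv: "\<And>s. s \<in> {e..x0} \<Longrightarrow> (V has_real_derivative V' s) (at s)"
    and defect: "\<And>s. s \<in> {e..x0} \<Longrightarrow> s * V' s \<le> V s" and t: "t \<in> {e..x0}"
  shows "V x0 / x0 \<le> V t / t"
proof (rule DERIV_nonpos_imp_nonincreasing[of t x0 "\<lambda>s. V s / s"])
  show "t \<le> x0" using t by simp
  fix s assume "t \<le> s" "s \<le> x0"
  hence s: "s \<in> {e..x0}" "0 < s" using t assms by auto
  have "((\<lambda>s. V s / s) has_real_derivative (V' s * s - V s) / s\<^sup>2) (at s)"
    using deriv[OF s(1)] s by (auto intro!: derivative_eq_intros simp: power2_eq_square)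
  moreover have "(V' s * s - V s) / s\<^sup>2 \<le> 0"
    using defect[OF s(1)] by (simp add: divide_nonpos_pos algebra_simps divide_le_0_iff)
  ultimately show "\<exists>y. ((\<lambda>s. V s / s) has_real_derivative y) (at s) \<and> y \<le> 0" by blast
qed

lemma quotient_le_if_slope_defect_ge:
  fixes V V' :: "real \<Rightarrow> real"
  assumes "0 < e" and deriv: "\<And>s. s \<in> {e..x0} \<Longrightarrow> (V has_real_derivative V' s) (at s)"
    and defect: "\<And>s. s \<in> {e..x0} \<Longrightarrow> - k \<le> s * V' s - V s" and t: "t \<in> {e..x0}"
  shows "V t / t - k / t \<le> V x0 / x0 - k / x0"
proof (rule DERIV_nonneg_imp_nondecreasing[of t x0 "\<lambda>s. V s / s - k / s"])
  show "t \<le> x0" using t by simp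
  fix s assume "t \<le> s" "s \<le> x0"
  hence s: "s \<in> {e..x0}" "0 < s" using t assms by auto
  have "((\<lambda>s. V s / s - k / s) has_real_derivative (s * V' s - V s + k) / s\<^sup>2) (at s)"
    using deriv[OF s(1)] s
    by (auto intro!: derivative_eq_intros simp: power2_eq_square field_simps)
  moreover have "0 \<le> (s * V' s - V s + k) / s\<^sup>2"
    using defect[OF s(1)] by simp
  ultimately show "\<exists>y. ((\<lambda>s. V s / s - k / s) has_real_derivative y) (at s) \<and> 0 \<le> y" by blast
qed

lemma has_real_derivative_piecewise:
  fixes f g f' g' :: "real \<Rightarrow> real"
  assumes "b < a" "a < c"
    and f: "\<And>t. t \<in> {b..c} \<Longrightarrow> (f has_real_derivative f' t) (at t within {b..c})"
    and g: "\<And>t. a < t \<Longrightarrow> (g has_real_derivative g' t) (at t)"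
    and agree: "\<And>t. t \<in> {a<..c} \<Longrightarrow> f t = g t \<and> f' t = g' t"
    and "b < x"
  shows "((\<lambda>x. if x \<le> c then f x else g x) has_real_derivative (if x \<le> c then f' x else g' x)) (at x)"
proof -
  consider "x < c" | "x = c" | "c < x" by linarith
  thus ?thesis
  proof cases
    case 1
    have "at x within {b..c} = at x" using \<open>b < x\<close> 1 by (intro at_within_Icc_at) auto
    hence "(f has_real_derivative f' x) (at x)" using f[of x] \<open>b < x\<close> 1 by auto
    hence "((\<lambda>x. if x \<le> c then f x else g x) has_real_derivative f' x) (at x)"
      by (rule has_field_derivative_transform_within_open[of _ _ _ "{..<c}"]) (use 1 in auto)
    thus ?thesis using 1 by simp
  next
    case 2
    have "((\<lambda>x. if x \<le> c then f x else g x) has_real_derivative f' c) (at c)"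
      using agree[of c] f[of c] g[of c] assms by (intro has_real_derivative_glue[of b]) auto
    thus ?thesis using 2 by simp
  next
    case 3
    have "(g has_real_derivative g' x) (at x)" using g[of x] assms 3 by simp
    hence "((\<lambda>x. if x \<le> c then f x else g x) has_real_derivative g' x) (at x)"
      by (rule has_field_derivative_transform_within_open[of _ _ _ "{c<..}"]) (use 3 in auto)
    thus ?thesis using 3 by simp
  qed
qed

lemma ode_solution_on_glue:
  fixes V V' V'' y w :: "real \<Rightarrow> real"
  assumes sol: "ode_solution_on n {a<..} V V' V''" and "b < a" "a < c"
    and local_sol: "\<And>t. t \<in> {b..c} \<Longrightarrow> (y has_real_derivative w t) (at t within {b..c})
               \<and> (w has_real_derivative ode_rhs n t (y t) (w t)) (at t within {b..c}) \<and> 0 < y t"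
    and agree: "\<And>t. t \<in> {a<..c} \<Longrightarrow> y t = V t \<and> w t = V' t"
  shows "ode_solution_on n {b<..} (\<lambda>x. if x \<le> c then y x else V x) (\<lambda>x. if x \<le> c then w x else V' x)
           (\<lambda>x. if x \<le> c then ode_rhs n x (y x) (w x) else V'' x)"
  unfolding ode_solution_on_def
proof (intro ballI conjI)
  note S = ode_solution_onD[OF sol]
  fix x assume x: "x \<in> {b<..}"
  show "0 < (if x \<le> c then y x else V x)" using local_sol[of x] S(1)[of x] x assms by auto
  show "(if x \<le> c then ode_rhs n x (y x) (w x) else V'' x) =
        ((x * (if x \<le> c then w x else V' x) - (if x \<le> c then y x else V x)) / 2
          + (real n - 1) / (if x \<le> c then y x else V x)) * (1 + (if x \<le> c then w x else V' x)\<^sup>2)"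
    using S(4)[of x] x assms by (auto simp: ode_rhs_def)
  have agree': "w t = V' t \<and> ode_rhs n t (y t) (w t) = V'' t" if "t \<in> {a<..c}" for t
    using agree[OF that] S(4)[of t] that by simp
  show "((\<lambda>x. if x \<le> c then y x else V x) has_real_derivative (if x \<le> c then w x else V' x)) (at x)"
    using local_sol S(2) agree x assms by (intro has_real_derivative_piecewise[of b a c]) auto
  show "((\<lambda>x. if x \<le> c then w x else V' x) has_real_derivative
        (if x \<le> c then ode_rhs n x (y x) (w x) else V'' x)) (at x)"
    using local_sol S(3) agree' x assms by (intro has_real_derivative_piecewise[of b a c]) auto
qed

text \<open>
  Backwards from \<open>x\<^sub>0\<close>, every extension stays on \<open>[\<epsilon>, x\<^sub>0]\<close> in the box
  \<open>[q\<epsilon>, y_max \<epsilon>] \<times> [-w_max \<epsilon>, w_max \<epsilon>]\<close>, by \<open>extension_bounds\<close>; its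
  \<open>margin \<epsilon>\<close>-neighbourhood gives the bound \<open>rhs_max \<epsilon>\<close> and Lipschitz constant \<open>lip \<epsilon>\<close> of the
  equation, hence a Picard step \<open>step \<epsilon>\<close> that depends on \<open>\<epsilon>\<close> only.
\<close>
locale ode_continuation =
  fixes n :: nat and d x0 :: real and u u' u'' :: "real \<Rightarrow> real"
  assumes n_ge: "2 \<le> n" and d_pos: "0 < d" and x0_gt: "d < x0"
    and sol: "ode_solution_on n {d<..} u u' u''"
    and defect_x0: "x0 * u' x0 \<le> u x0"
begin

definition q :: real where "q = u x0 / x0"
definition K :: real where "K = u x0 - x0 * u' x0"
definition k :: "real \<Rightarrow> real" where "k \<epsilon> = 2 * (real n - 1) / (q * \<epsilon>) + K + 1"
definition y_max :: "real \<Rightarrow> real" where "y_max \<epsilon> = x0 * (q + k \<epsilon> / \<epsilon>)"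
definition w_max :: "real \<Rightarrow> real" where "w_max \<epsilon> = q + k \<epsilon> / \<epsilon>"
definition margin :: "real \<Rightarrow> real" where "margin \<epsilon> = q * \<epsilon> / 2"
definition lip :: "real \<Rightarrow> real" where
  "lip \<epsilon> = rhs_lipschitz n x0 (margin \<epsilon>) (y_max \<epsilon> + margin \<epsilon>) (w_max \<epsilon> + margin \<epsilon>) + 1"
definition rhs_max :: "real \<Rightarrow> real" where
  "rhs_max \<epsilon> = w_max \<epsilon> + margin \<epsilon> + bracket_bound n x0 (margin \<epsilon>) (y_max \<epsilon> + margin \<epsilon>) (w_max \<epsilon> + margin \<epsilon>)
                  * (1 + (w_max \<epsilon> + margin \<epsilon>)\<^sup>2)"
definition step :: "real \<Rightarrow> real" where
  "step \<epsilon> = min (\<epsilon> / 2) (min (margin \<epsilon> / rhs_max \<epsilon>) (min (1 / (4 * lip \<epsilon>)) (x0 - d)))"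

definition in_box :: "real \<Rightarrow> real \<Rightarrow> real \<Rightarrow> bool" where
  "in_box \<epsilon> y w \<longleftrightarrow> margin \<epsilon> \<le> y \<and> y \<le> y_max \<epsilon> + margin \<epsilon> \<and> \<bar>w\<bar> \<le> w_max \<epsilon> + margin \<epsilon>"

definition extends_to :: "real \<Rightarrow> (real \<Rightarrow> real) \<Rightarrow> (real \<Rightarrow> real) \<Rightarrow> (real \<Rightarrow> real) \<Rightarrow> bool" where
  "extends_to a V V' V'' \<longleftrightarrow> 0 < a \<and> a \<le> d \<and> ode_solution_on n {a<..} V V' V'' \<and> (\<forall>x>d. V x = u x)"

lemma q_pos: "0 < q" and K_nonneg: "0 \<le> K"
  using ode_solution_onD(1)[OF sol, of x0] x0_gt d_pos defect_x0 by (auto simp: q_def K_def)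

lemma constants:
  assumes "0 < \<epsilon>"
  shows "0 < margin \<epsilon>" "0 \<le> k \<epsilon>" "0 \<le> y_max \<epsilon>" "0 \<le> w_max \<epsilon>" "1 \<le> lip \<epsilon>"
    "w_max \<epsilon> + margin \<epsilon> \<le> rhs_max \<epsilon>" "0 < rhs_max \<epsilon>"
    "0 < step \<epsilon>" "step \<epsilon> \<le> \<epsilon> / 2" "step \<epsilon> * rhs_max \<epsilon> \<le> margin \<epsilon>" "4 * step \<epsilon> * lip \<epsilon> \<le> 1"
    "step \<epsilon> \<le> x0 - d"
proof -
  have n1: "1 \<le> n" using n_ge by simp
  show margin: "0 < margin \<epsilon>" using q_pos assms by (simp add: margin_def)
  show k: "0 \<le> k \<epsilon>" using q_pos assms K_nonneg n_ge by (simp add: k_def)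
  show w: "0 \<le> w_max \<epsilon>" using q_pos k assms by (simp add: w_max_def)
  show y: "0 \<le> y_max \<epsilon>" using w x0_gt d_pos by (simp add: y_max_def w_max_def[symmetric])
  show lip: "1 \<le> lip \<epsilon>" using rhs_lipschitz_nonneg[OF _ _ _ margin n1] w y x0_gt d_pos margin
    by (simp add: lip_def)
  have "0 \<le> bracket_bound n x0 (margin \<epsilon>) (y_max \<epsilon> + margin \<epsilon>) (w_max \<epsilon> + margin \<epsilon>)
      * (1 + (w_max \<epsilon> + margin \<epsilon>)\<^sup>2)"
    using bracket_bound_nonneg[OF _ _ _ margin n1] w y x0_gt d_pos margin by simp
  thus "w_max \<epsilon> + margin \<epsilon> \<le> rhs_max \<epsilon>" by (simp add: rhs_max_def)
  thus M: "0 < rhs_max \<epsilon>" using w margin by simp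
  show "0 < step \<epsilon>" using assms margin M lip x0_gt by (simp add: step_def)
  show "step \<epsilon> \<le> \<epsilon> / 2" "step \<epsilon> \<le> x0 - d" unfolding step_def by linarith+
  have "step \<epsilon> \<le> margin \<epsilon> / rhs_max \<epsilon>" "step \<epsilon> \<le> 1 / (4 * lip \<epsilon>)" unfolding step_def by linarith+
  thus "step \<epsilon> * rhs_max \<epsilon> \<le> margin \<epsilon>" "4 * step \<epsilon> * lip \<epsilon> \<le> 1"
    using M lip by (simp_all add: pos_le_divide_eq mult.commute mult.left_commute)
qed

lemma box_lipschitz:
  assumes "0 < \<epsilon>" "0 \<le> t" "t \<le> x0" "in_box \<epsilon> y1 w1" "in_box \<epsilon> y2 w2"
  shows "\<bar>ode_rhs n t y1 w1 - ode_rhs n t y2 w2\<bar> \<le> lip \<epsilon> * (\<bar>y1 - y2\<bar> + \<bar>w1 - w2\<bar>)"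
    "\<bar>w1 - w2\<bar> \<le> lip \<epsilon> * (\<bar>y1 - y2\<bar> + \<bar>w1 - w2\<bar>)"
proof -
  note cs = constants[OF \<open>0 < \<epsilon>\<close>]
  have "\<bar>ode_rhs n t y1 w1 - ode_rhs n t y2 w2\<bar>
      \<le> rhs_lipschitz n x0 (margin \<epsilon>) (y_max \<epsilon> + margin \<epsilon>) (w_max \<epsilon> + margin \<epsilon>) * (\<bar>y1 - y2\<bar> + \<bar>w1 - w2\<bar>)"
    using assms cs n_ge unfolding in_box_def by (intro ode_rhs_lipschitz) auto
  thus "\<bar>ode_rhs n t y1 w1 - ode_rhs n t y2 w2\<bar> \<le> lip \<epsilon> * (\<bar>y1 - y2\<bar> + \<bar>w1 - w2\<bar>)"
    by (smt (verit, best) abs_ge_zero lip_def mult_right_mono)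
  show "\<bar>w1 - w2\<bar> \<le> lip \<epsilon> * (\<bar>y1 - y2\<bar> + \<bar>w1 - w2\<bar>)"
    using mult_right_mono[OF cs(5), of "\<bar>y1 - y2\<bar> + \<bar>w1 - w2\<bar>"] by simp
qed

lemma extension_agrees:
  assumes "extends_to a V V' V''" "d < x"
  shows "V x = u x" "V' x = u' x"
proof -
  show "V x = u x" using assms by (simp add: extends_to_def)
  have "(V has_real_derivative u' x) (at x)"
    by (rule has_field_derivative_transform_within_open[OF ode_solution_onD(2)[OF sol], of x "{d<..}"])
       (use assms in \<open>auto simp: extends_to_def\<close>)
  moreover have "(V has_real_derivative V' x) (at x)"
    using ode_solution_onD(2)[of n "{a<..}" V V' V'' x] assms by (auto simp: extends_to_def)
  ultimately show "V' x = u' x" by (rule DERIV_unique[symmetric])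
qed

lemma extension_slope_defect_bounds:
  assumes ext: "extends_to a V V' V''" and "0 < \<epsilon>" "\<epsilon> \<le> e" "a < e" and s: "s \<in> {e..x0}"
  shows "q * s \<le> V s" "- k \<epsilon> \<le> s * V' s - V s" "s * V' s \<le> V s"
proof -
  have sol_V: "ode_solution_on n {a<..} V V' V''" using ext by (simp add: extends_to_def)
  have at_x0: "V x0 = u x0" "V' x0 = u' x0" using extension_agrees[OF ext] x0_gt by auto
  have e0: "0 < e" using assms by simp
  have deriv: "(V has_real_derivative V' r) (at r)" if "r \<in> {e..x0}" for r
    using ode_solution_onD(2)[OF sol_V] that assms by auto
  have defect: "r * V' r \<le> V r" if "r \<in> {e..x0}" for r
    using ode_slope_defect_nonpos[OF n_ge sol_V \<open>a < e\<close> e0 _ that] at_x0 defect_x0 by simp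
  have line: "q * r \<le> V r" if "r \<in> {e..x0}" for r
  proof -
    have "q \<le> V r / r"
      using quotient_ge_if_slope_defect_nonpos[OF e0 deriv defect that] at_x0 by (simp add: q_def)
    thus ?thesis using that e0 by (simp add: pos_le_divide_eq mult.commute)
  qed
  have lower: "q * \<epsilon> \<le> V r" if "r \<in> {e..x0}" for r
  proof -
    have "q * \<epsilon> \<le> q * r" using that assms q_pos by (intro mult_left_mono) auto
    thus ?thesis using line[OF that] by simp
  qed
  have k_large: "2 * (real n - 1) / (q * \<epsilon>) < k \<epsilon>" using K_nonneg by (simp add: k_def)
  have "0 \<le> 2 * (real n - 1) / (q * \<epsilon>)" using q_pos \<open>0 < \<epsilon>\<close> n_ge by simp
  hence k_x0: "- k \<epsilon> \<le> x0 * V' x0 - V x0" using at_x0 by (simp add: K_def k_def)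
  show "q * s \<le> V s" "s * V' s \<le> V s" using line[OF s] defect[OF s] .
  show "- k \<epsilon> \<le> s * V' s - V s"
    using q_pos \<open>0 < \<epsilon>\<close> by (intro ode_slope_defect_lower[OF n_ge sol_V \<open>a < e\<close> e0 _ lower k_large k_x0 s]) simp
qed

lemma extension_bounds:
  assumes ext: "extends_to a V V' V''" and "0 < \<epsilon>" "\<epsilon> \<le> e" "a < e" "e \<le> x0" and t: "t \<in> {e..x0}"
  shows "q * \<epsilon> \<le> V t" "V t \<le> y_max \<epsilon>" "\<bar>V' t\<bar> \<le> w_max \<epsilon>"
proof -
  note defect = extension_slope_defect_bounds[OF ext \<open>0 < \<epsilon>\<close> \<open>\<epsilon> \<le> e\<close> \<open>a < e\<close>]
  have sol_V: "ode_solution_on n {a<..} V V' V''" using ext by (simp add: extends_to_def)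
  have e0: "0 < e" and t0: "0 < t" and "\<epsilon> \<le> t" using assms by auto
  have deriv: "(V has_real_derivative V' s) (at s)" if "s \<in> {e..x0}" for s
    using ode_solution_onD(2)[OF sol_V] that assms by auto
  have "V t / t - k \<epsilon> / t \<le> q - k \<epsilon> / x0"
    using quotient_le_if_slope_defect_ge[OF e0 deriv defect(2) t] extension_agrees[OF ext] x0_gt
    by (simp add: q_def)
  moreover have "0 \<le> k \<epsilon> / x0" "k \<epsilon> / t \<le> k \<epsilon> / \<epsilon>"
    using constants(2)[OF \<open>0 < \<epsilon>\<close>] x0_gt d_pos \<open>0 < \<epsilon>\<close> \<open>\<epsilon> \<le> t\<close> by (auto intro: divide_left_mono)
  ultimately have quotient_le: "V t / t \<le> w_max \<epsilon>" by (simp add: w_max_def)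
  have "q * \<epsilon> \<le> q * t" using q_pos \<open>\<epsilon> \<le> t\<close> by (intro mult_left_mono) auto
  thus "q * \<epsilon> \<le> V t" using defect(1)[OF t] by simp
  have "V t \<le> t * w_max \<epsilon>" using quotient_le t0 by (simp add: pos_divide_le_eq mult.commute)
  also have "\<dots> \<le> y_max \<epsilon>"
    using t constants(4)[OF \<open>0 < \<epsilon>\<close>] by (simp add: y_max_def w_max_def[symmetric] mult_right_mono)
  finally show "V t \<le> y_max \<epsilon>" .
  have split: "V' t = V t / t + (t * V' t - V t) / t" using t0 by (simp add: field_simps)
  have "(t * V' t - V t) / t \<le> 0" using defect(3)[OF t] t0 by (simp add: divide_nonpos_pos)
  moreover have "- k \<epsilon> / t \<le> (t * V' t - V t) / t"
    using divide_right_mono[OF defect(2)[OF t], of t] t0 by simp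
  moreover have "q \<le> V t / t" using defect(1)[OF t] t0 by (simp add: pos_le_divide_eq mult.commute)
  ultimately show "\<bar>V' t\<bar> \<le> w_max \<epsilon>"
    using quotient_le q_pos \<open>k \<epsilon> / t \<le> k \<epsilon> / \<epsilon>\<close> unfolding w_max_def abs_le_iff
    by (subst (1 2) split) linarith
qed

lemma box_solutions_agree:
  assumes "0 < \<epsilon>" "0 \<le> t" "g \<le> x0"
    and solA: "\<And>s. s \<in> {t..g} \<Longrightarrow> (yA has_real_derivative wA s) (at s within {t..g})
      \<and> (wA has_real_derivative ode_rhs n s (yA s) (wA s)) (at s within {t..g}) \<and> in_box \<epsilon> (yA s) (wA s)"
    and solB: "\<And>s. s \<in> {t..g} \<Longrightarrow> (yB has_real_derivative wB s) (at s within {t..g})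
      \<and> (wB has_real_derivative ode_rhs n s (yB s) (wB s)) (at s within {t..g}) \<and> in_box \<epsilon> (yB s) (wB s)"
    and "yA g = yB g" "wA g = wB g" "t \<le> g"
  shows "yA t = yB t \<and> wA t = wB t"
proof (rule pair_ode_backward_unique[where \<alpha>=t and \<beta>=g and L="lip \<epsilon>" and t=t
      and yA=yA and wA=wA and yB=yB and wB=wB])
  show "0 \<le> lip \<epsilon>" using constants(5)[OF \<open>0 < \<epsilon>\<close>] by simp
  fix s assume s: "s \<in> {t..g}"
  note L = box_lipschitz[of \<epsilon> s "yA s" "wA s" "yB s" "wB s"]
  show "\<bar>wA s - wB s\<bar> \<le> lip \<epsilon> * (\<bar>yA s - yB s\<bar> + \<bar>wA s - wB s\<bar>)"
    "\<bar>ode_rhs n s (yA s) (wA s) - ode_rhs n s (yB s) (wB s)\<bar> \<le> lip \<epsilon> * (\<bar>yA s - yB s\<bar> + \<bar>wA s - wB s\<bar>)"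
    using L solA[OF s] solB[OF s] s assms by auto
qed (use assms in auto)

lemma extension_in_box:
  assumes ext: "extends_to a V V' V''" and "0 < \<epsilon>" "\<epsilon> \<le> e" "a < e" "s \<in> {e..x0}"
  shows "(V has_real_derivative V' s) (at s within S)
    \<and> (V' has_real_derivative ode_rhs n s (V s) (V' s)) (at s within S) \<and> in_box \<epsilon> (V s) (V' s)"
proof -
  have "s \<in> {a<..}" and sol_V: "ode_solution_on n {a<..} V V' V''"
    using assms by (auto simp: extends_to_def)
  note S = ode_solution_onD[OF sol_V this(1)]
  have "e \<le> x0" using assms by simp
  note bounds = extension_bounds[OF ext \<open>0 < \<epsilon>\<close> \<open>\<epsilon> \<le> e\<close> \<open>a < e\<close> this \<open>s \<in> {e..x0}\<close>]
  have "margin \<epsilon> \<le> q * \<epsilon>" using constants(1)[OF \<open>0 < \<epsilon>\<close>] unfolding margin_def by linarith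
  thus ?thesis
    using S(2,3) S(4)[symmetric] bounds constants(1)[OF \<open>0 < \<epsilon>\<close>]
    by (auto simp: in_box_def intro: has_field_derivative_at_within)
qed

lemma extensions_agree:
  assumes ext1: "extends_to a1 V1 V1' V1''" and ext2: "extends_to a2 V2 V2' V2''"
    and "a1 < z" "a2 < z"
  shows "V1 z = V2 z \<and> V1' z = V2' z"
proof (cases "d < z")
  case True
  thus ?thesis using extension_agrees[OF ext1] extension_agrees[OF ext2] by simp
next
  case False
  hence "z \<le> x0" using x0_gt by simp
  have "0 < z" using ext1 \<open>a1 < z\<close> by (simp add: extends_to_def)
  show ?thesis
    using extension_in_box[OF ext1 \<open>0 < z\<close> order_refl \<open>a1 < z\<close>]
      extension_in_box[OF ext2 \<open>0 < z\<close> order_refl \<open>a2 < z\<close>]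
      extension_agrees[OF ext1] extension_agrees[OF ext2] x0_gt \<open>0 < z\<close> \<open>z \<le> x0\<close>
    by (intro box_solutions_agree[of z z x0]) auto
qed

text \<open>Clipping makes the right-hand side globally bounded and Lipschitz; the Picard solution never
  leaves the box, where the clipping is inactive.\<close>
definition clipped_slope :: "real \<Rightarrow> real \<Rightarrow> real \<Rightarrow> real \<Rightarrow> real" where
  "clipped_slope \<epsilon> t y w = clip (- (w_max \<epsilon> + margin \<epsilon>)) (w_max \<epsilon> + margin \<epsilon>) w"

definition clipped_rhs :: "real \<Rightarrow> real \<Rightarrow> real \<Rightarrow> real \<Rightarrow> real" where
  "clipped_rhs \<epsilon> t y w =
     ode_rhs n (clip 0 x0 t) (clip (margin \<epsilon>) (y_max \<epsilon> + margin \<epsilon>) y) (clipped_slope \<epsilon> t y w)"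

lemma picard_pair_clipped:
  assumes "0 < \<epsilon>"
  shows "picard_pair (clipped_slope \<epsilon>) (clipped_rhs \<epsilon>) (g - step \<epsilon>) g (rhs_max \<epsilon>) (lip \<epsilon>)"
proof -
  define c C W h where "c = margin \<epsilon>" and "C = y_max \<epsilon> + margin \<epsilon>" and "W = w_max \<epsilon> + margin \<epsilon>"
    and "h = step \<epsilon>"
  note cs = constants[OF \<open>0 < \<epsilon>\<close>, folded c_def C_def W_def h_def]
  have c_pos: "0 < c" and cC: "c \<le> C" and W_nonneg: "0 \<le> W" and x0_nonneg: "0 \<le> x0"
    using cs x0_gt d_pos unfolding C_def W_def c_def[symmetric] by auto
  have f_def: "clipped_slope \<epsilon> t y w = clip (-W) W w" for t y w
    by (simp add: clipped_slope_def W_def)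
  have F_def: "clipped_rhs \<epsilon> t y w = ode_rhs n (clip 0 x0 t) (clip c C y) (clip (-W) W w)" for t y w
    by (simp add: clipped_rhs_def f_def c_def C_def)
  have clip_box: "0 \<le> clip 0 x0 t" "clip 0 x0 t \<le> x0" "c \<le> clip c C y" "clip c C y \<le> C"
      "\<bar>clip (-W) W w\<bar> \<le> W" for t y w
    using clip_in_range[OF x0_nonneg, of t] clip_in_range[OF cC, of y] clip_in_range[of "-W" W w] W_nonneg
    by auto
  show ?thesis
  proof
    show "g - step \<epsilon> \<le> g" "0 \<le> lip \<epsilon>" "4 * (g - (g - step \<epsilon>)) * lip \<epsilon> \<le> 1"
      using cs by (auto simp: h_def)
    fix t y w y' w' :: real
    show "\<bar>clipped_slope \<epsilon> t y w\<bar> \<le> rhs_max \<epsilon>" using clip_box(5)[of w] cs by (simp add: f_def W_def)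
    have "\<bar>clipped_rhs \<epsilon> t y w\<bar> \<le> bracket_bound n x0 c C W * (1 + W\<^sup>2)"
      unfolding F_def using clip_box c_pos n_ge by (intro ode_rhs_le) auto
    thus "\<bar>clipped_rhs \<epsilon> t y w\<bar> \<le> rhs_max \<epsilon>" using W_nonneg by (simp add: rhs_max_def c_def C_def W_def)
    have "\<bar>clipped_slope \<epsilon> t y w - clipped_slope \<epsilon> t y' w'\<bar> \<le> \<bar>w - w'\<bar>"
      unfolding f_def using clip_lipschitz W_nonneg by simp
    also have "\<dots> \<le> lip \<epsilon> * (\<bar>y - y'\<bar> + \<bar>w - w'\<bar>)"
      using mult_right_mono[OF cs(5), of "\<bar>y - y'\<bar> + \<bar>w - w'\<bar>"] by simp
    finally show "\<bar>clipped_slope \<epsilon> t y w - clipped_slope \<epsilon> t y' w'\<bar> \<le> lip \<epsilon> * (\<bar>y - y'\<bar> + \<bar>w - w'\<bar>)" .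
    have "\<bar>clipped_rhs \<epsilon> t y w - clipped_rhs \<epsilon> t y' w'\<bar>
        \<le> lip \<epsilon> * (\<bar>clip c C y - clip c C y'\<bar> + \<bar>clip (-W) W w - clip (-W) W w'\<bar>)"
      unfolding F_def using clip_box \<open>0 < \<epsilon>\<close>
      by (intro box_lipschitz(1)) (auto simp: in_box_def c_def C_def W_def)
    also have "\<dots> \<le> lip \<epsilon> * (\<bar>y - y'\<bar> + \<bar>w - w'\<bar>)"
      using clip_lipschitz[OF cC, of y y'] clip_lipschitz[of "-W" W w w'] W_nonneg cs(5)
      by (intro mult_left_mono) auto
    finally show "\<bar>clipped_rhs \<epsilon> t y w - clipped_rhs \<epsilon> t y' w'\<bar> \<le> lip \<epsilon> * (\<bar>y - y'\<bar> + \<bar>w - w'\<bar>)" .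
  next
    fix y w :: "real \<Rightarrow> real"
    assume "continuous_on {g - step \<epsilon>..g} y" "continuous_on {g - step \<epsilon>..g} w"
    moreover have "clip c C (y t) \<noteq> 0" for t using clip_box(3)[of "y t"] c_pos by auto
    ultimately show "continuous_on {g - step \<epsilon>..g} (\<lambda>t. clipped_slope \<epsilon> t (y t) (w t))"
      "continuous_on {g - step \<epsilon>..g} (\<lambda>t. clipped_rhs \<epsilon> t (y t) (w t))"
      unfolding f_def F_def ode_rhs_def by (auto intro!: continuous_intros)
  qed
qed

lemma local_solution:
  assumes "0 < \<epsilon>" "\<epsilon> \<le> g" "g \<le> x0" "q * \<epsilon> \<le> y0" "y0 \<le> y_max \<epsilon>" "\<bar>w0\<bar> \<le> w_max \<epsilon>"
  shows "\<exists>y w. y g = y0 \<and> w g = w0 \<and> (\<forall>t\<in>{g - step \<epsilon>..g}.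
      (y has_real_derivative w t) (at t within {g - step \<epsilon>..g})
    \<and> (w has_real_derivative ode_rhs n t (y t) (w t)) (at t within {g - step \<epsilon>..g})
    \<and> in_box \<epsilon> (y t) (w t))"
proof -
  define c C W h where "c = margin \<epsilon>" and "C = y_max \<epsilon> + margin \<epsilon>" and "W = w_max \<epsilon> + margin \<epsilon>"
    and "h = step \<epsilon>"
  note cs = constants[OF \<open>0 < \<epsilon>\<close>, folded c_def C_def W_def h_def]
  interpret picard_pair "clipped_slope \<epsilon>" "clipped_rhs \<epsilon>" "g - h" g y0 w0 "rhs_max \<epsilon>" "lip \<epsilon>"
    unfolding h_def by (rule picard_pair_clipped[OF \<open>0 < \<epsilon>\<close>])
  obtain y w where yw: "y g = y0" "w g = w0"
    and sol_yw: "\<And>t. t \<in> {g - h..g} \<Longrightarrow> (y has_real_derivative clipped_slope \<epsilon> t (y t) (w t)) (at t within {g - h..g})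
      \<and> (w has_real_derivative clipped_rhs \<epsilon> t (y t) (w t)) (at t within {g - h..g})
      \<and> \<bar>y t - y0\<bar> \<le> rhs_max \<epsilon> * (g - t) \<and> \<bar>w t - w0\<bar> \<le> rhs_max \<epsilon> * (g - t)"
    using picard_pair_solution by blast
  have stays_in_box: "c \<le> y t \<and> y t \<le> C \<and> \<bar>w t\<bar> \<le> W \<and> 0 \<le> t \<and> t \<le> x0" if t: "t \<in> {g - h..g}" for t
  proof -
    have "rhs_max \<epsilon> * (g - t) \<le> rhs_max \<epsilon> * h" using t cs by (intro mult_left_mono) auto
    also have "\<dots> \<le> margin \<epsilon>" using cs by (simp add: mult.commute c_def)
    finally have "\<bar>y t - y0\<bar> \<le> margin \<epsilon>" "\<bar>w t - w0\<bar> \<le> margin \<epsilon>" using sol_yw[OF t] by auto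
    moreover have "c = q * \<epsilon> - margin \<epsilon>" by (simp add: c_def margin_def)
    ultimately show ?thesis using assms t cs by (auto simp: C_def W_def abs_le_iff)
  qed
  show ?thesis
  proof (intro exI conjI ballI)
    fix t assume t: "t \<in> {g - step \<epsilon>..g}"
    hence "clipped_slope \<epsilon> t (y t) (w t) = w t" "clipped_rhs \<epsilon> t (y t) (w t) = ode_rhs n t (y t) (w t)"
      using stays_in_box[of t] clip_id
      by (auto simp: clipped_slope_def clipped_rhs_def c_def C_def W_def h_def abs_le_iff)
    thus "(y has_real_derivative w t) (at t within {g - step \<epsilon>..g})"
      "(w has_real_derivative ode_rhs n t (y t) (w t)) (at t within {g - step \<epsilon>..g})"
      using sol_yw[of t] t by (simp_all add: h_def)
    show "in_box \<epsilon> (y t) (w t)"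
      using stays_in_box[of t] t by (simp add: in_box_def c_def C_def W_def h_def)
  qed (use yw in auto)
qed

lemma extension_step:
  assumes ext: "extends_to a V V' V''" and "0 < \<epsilon>" "\<epsilon> \<le> a"
  shows "\<exists>W W' W''. extends_to (a - 3 / 4 * step \<epsilon>) W W' W''"
proof -
  have sol_V: "ode_solution_on n {a<..} V V' V''" and "a \<le> d"
    using ext by (simp_all add: extends_to_def)
  note cs = constants[OF \<open>0 < \<epsilon>\<close>]
  define h g where "h = step \<epsilon>" and "g = a + h / 4"
  have g: "a < g" "\<epsilon> \<le> g" "g \<le> x0" "0 < g - h" "g - h < a"
    using cs \<open>a \<le> d\<close> \<open>\<epsilon> \<le> a\<close> x0_gt by (auto simp: g_def h_def)
  note bounds = extension_bounds[OF ext \<open>0 < \<epsilon>\<close>]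
  obtain y w where yw: "y g = V g" "w g = V' g"
    and local_sol: "\<And>t. t \<in> {g - h..g} \<Longrightarrow> (y has_real_derivative w t) (at t within {g - h..g})
      \<and> (w has_real_derivative ode_rhs n t (y t) (w t)) (at t within {g - h..g})
      \<and> in_box \<epsilon> (y t) (w t)"
    using local_solution[OF \<open>0 < \<epsilon>\<close> g(2,3) bounds[of g g]] g unfolding h_def by auto
  have agree: "y t = V t \<and> w t = V' t" if t: "t \<in> {a<..g}" for t
  proof (rule box_solutions_agree[where \<epsilon>=\<epsilon> and t=t and g=g and yA=y and wA=w and yB=V and wB=V'])
    fix s assume s: "s \<in> {t..g}"
    have sub: "{t..g} \<subseteq> {g - h..g}" and "s \<in> {g - h..g}" using s t g by auto
    note loc = local_sol[OF this(2)]
    show "(y has_real_derivative w s) (at s within {t..g})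
      \<and> (w has_real_derivative ode_rhs n s (y s) (w s)) (at s within {t..g}) \<and> in_box \<epsilon> (y s) (w s)"
      using DERIV_subset[OF conjunct1[OF loc] sub] DERIV_subset[OF conjunct1[OF conjunct2[OF loc]] sub] loc
      by simp
    show "(V has_real_derivative V' s) (at s within {t..g})
      \<and> (V' has_real_derivative ode_rhs n s (V s) (V' s)) (at s within {t..g}) \<and> in_box \<epsilon> (V s) (V' s)"
      using extension_in_box[OF ext \<open>0 < \<epsilon>\<close>, of t s] s t g \<open>\<epsilon> \<le> a\<close> by auto
  qed (use t g yw \<open>\<epsilon> \<le> a\<close> \<open>0 < \<epsilon>\<close> in auto)
  have "ode_solution_on n {g - h<..} (\<lambda>x. if x \<le> g then y x else V x) (\<lambda>x. if x \<le> g then w x else V' x)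
      (\<lambda>x. if x \<le> g then ode_rhs n x (y x) (w x) else V'' x)"
    using local_sol cs(1) by (intro ode_solution_on_glue[OF sol_V g(5) g(1)] agree) (force simp: in_box_def)+
  moreover have "\<forall>x>d. (if x \<le> g then y x else V x) = u x"
    using agree extension_agrees(1)[OF ext] \<open>a \<le> d\<close> by auto
  moreover have "g - h = a - 3 / 4 * step \<epsilon>" by (simp add: g_def h_def)
  ultimately show ?thesis using g \<open>a \<le> d\<close> unfolding extends_to_def by auto
qed

lemma extension_below:
  assumes "0 < \<epsilon>"
  shows "\<exists>a V V' V''. a < \<epsilon> \<and> extends_to a V V' V''"
proof -
  define h where "h = 3 / 4 * step \<epsilon>"
  have "0 < h" using constants(8)[OF assms] by (simp add: h_def)
  have descent: "\<exists>a V V' V''. extends_to a V V' V'' \<and> (a < \<epsilon> \<or> a \<le> d - real N * h)" for N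
  proof (induction N)
    case 0
    have "extends_to d u u' u''" using sol d_pos by (simp add: extends_to_def)
    thus ?case by auto
  next
    case (Suc N)
    then obtain a V V' V'' where ext: "extends_to a V V' V''" and a: "a < \<epsilon> \<or> a \<le> d - real N * h"
      by blast
    show ?case
    proof (cases "a < \<epsilon>")
      case True
      thus ?thesis using ext by blast
    next
      case False
      then obtain W W' W'' where "extends_to (a - h) W W' W''"
        using extension_step[OF ext assms] unfolding h_def by auto
      moreover have "a - h \<le> d - real (Suc N) * h" using a False by (simp add: algebra_simps)
      ultimately show ?thesis by blast
    qed
  qed
  obtain N :: nat where "d / h < real N" using reals_Archimedean2 by blast
  hence "d - real N * h < 0" using \<open>0 < h\<close> by (simp add: pos_divide_less_eq mult.commute)
  obtain a V V' V'' where ext: "extends_to a V V' V''" and a: "a < \<epsilon> \<or> a \<le> d - real N * h"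
    using descent by blast
  have "0 < a" using ext by (simp add: extends_to_def)
  hence "a < \<epsilon>" using a \<open>d - real N * h < 0\<close> by auto
  thus ?thesis using ext by blast
qed

theorem extension_to_zero: "\<exists>v v' v''. ode_solution_on n {0<..} v v' v'' \<and> (\<forall>x>d. v x = u x)"
proof -
  obtain A Vs Vs' Vs'' where ext: "\<And>\<epsilon>. 0 < \<epsilon> \<Longrightarrow> A \<epsilon> < \<epsilon> \<and> extends_to (A \<epsilon>) (Vs \<epsilon>) (Vs' \<epsilon>) (Vs'' \<epsilon>)"
    using extension_below by metis
  define v v' v'' where "v x = Vs x x" and "v' x = Vs' x x" and "v'' x = Vs'' x x" for x
  have pos: "0 < A x" if "0 < x" for x using ext[OF that] by (simp add: extends_to_def)
  have local_eq: "Vs x z = v z \<and> Vs' x z = v' z" if "0 < x" "A x < z" for x z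
    using extensions_agree[of "A x" "Vs x" "Vs' x" "Vs'' x" "A z" "Vs z" "Vs' z" "Vs'' z" z]
      ext[OF that(1)] ext[of z] pos[OF that(1)] that by (simp add: v_def v'_def)
  have "ode_solution_on n {0<..} v v' v''"
    unfolding ode_solution_on_def
  proof (intro ballI conjI)
    fix x :: real assume "x \<in> {0<..}"
    hence x: "0 < x" "x \<in> {A x<..}" using ext[of x] by auto
    have sol_x: "ode_solution_on n {A x<..} (Vs x) (Vs' x) (Vs'' x)"
      using ext[OF x(1)] by (simp add: extends_to_def)
    note S = ode_solution_onD[OF sol_x x(2)]
    show "0 < v x" using S(1) by (simp add: v_def)
    have "(v has_real_derivative Vs' x x) (at x)"
      by (rule has_field_derivative_transform_within_open[OF S(2), of "{A x<..}"]) (use x local_eq in auto)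
    thus "(v has_real_derivative v' x) (at x)" by (simp add: v'_def)
    have "(v' has_real_derivative Vs'' x x) (at x)"
      by (rule has_field_derivative_transform_within_open[OF S(3), of "{A x<..}"]) (use x local_eq in auto)
    thus "(v' has_real_derivative v'' x) (at x)" by (simp add: v''_def)
    show "v'' x = ((x * v' x - v x) / 2 + (real n - 1) / v x) * (1 + (v' x)\<^sup>2)"
      using S(4) by (simp add: v_def v'_def v''_def ode_rhs_def)
  qed
  moreover have "\<forall>x>d. v x = u x"
    using ext d_pos by (auto simp: v_def extends_to_def)
  ultimately show ?thesis by blast
qed

end

theorem ode_solution_extends_to_zero:
  assumes "n \<ge> 2" "0 \<le> d" and sol: "ode_solution_on n {d<..} u u' u''"
    and "\<And>x. d < x \<Longrightarrow> x * u' x \<le> u x"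
  shows "\<exists>v v' v''. ode_solution_on n {0<..} v v' v'' \<and> (\<forall>x>d. v x = u x)"
proof (cases "d = 0")
  case True
  thus ?thesis using sol by blast
next
  case False
  interpret ode_continuation n d "d + 1" u u' u''
    using assms False by unfold_locales auto
  show ?thesis by (rule extension_to_zero)
qed

theorem lemma3:
  fixes n :: nat and d \<sigma> :: real and u u' u'' :: "real \<Rightarrow> real"
  assumes "n \<ge> 2" and "d \<ge> 0" and "\<sigma> > 0"
    and sol: "ode_solution_on n {d<..} u u' u''"
    and inner_int: "\<forall>t>d. inner_integrand u u' t integrable_on {t..}"
    and outer_int: "\<forall>x>d. (\<lambda>t. inner_integral u u' t / t\<^sup>2) integrable_on {x..}"
    and ident: "\<forall>x>d. u x = 2 * (real n - 1) * x
                       * integral {x..} (\<lambda>t. inner_integral u u' t / t\<^sup>2) + \<sigma> * x"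
  shows "(\<forall>x>d. \<forall>s>x. \<bar>u s - \<sigma> * s\<bar> \<le> 2 * (real n - 1) / (\<sigma> * x))
       \<and> (\<forall>x>d. \<forall>s>x. \<bar>u' s - \<sigma>\<bar> \<le> 2 * (real n - 1) / (\<sigma> * x\<^sup>2))
       \<and> (\<exists>v v' v''. ode_solution_on n {0<..} v v' v'' \<and> (\<forall>x>d. v x = u x))"
proof (intro conjI allI impI)
  have "1 \<le> n" using \<open>n \<ge> 2\<close> by simp
  note bounds = integral_identity_bounds[OF this \<open>d \<ge> 0\<close> \<open>\<sigma> > 0\<close> sol inner_int outer_int ident]
  show "\<exists>v v' v''. ode_solution_on n {0<..} v v' v'' \<and> (\<forall>x>d. v x = u x)"
    using ode_solution_extends_to_zero[OF \<open>n \<ge> 2\<close> \<open>d \<ge> 0\<close> sol] bounds(5) by blast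
  fix x s assume "d < x" "x < s"
  hence "0 < x" "d < s" using \<open>d \<ge> 0\<close> by auto
  have "(real n - 1) / (\<sigma> * s) \<le> 2 * (real n - 1) / (\<sigma> * x)"
    using \<open>1 \<le> n\<close> \<open>\<sigma> > 0\<close> \<open>0 < x\<close> \<open>x < s\<close> by (simp add: frac_le)
  thus "\<bar>u s - \<sigma> * s\<bar> \<le> 2 * (real n - 1) / (\<sigma> * x)"
    using bounds(1,2)[OF \<open>d < s\<close>] by (simp add: abs_le_iff)
  have "(real n - 1) / (\<sigma> * s\<^sup>2) \<le> 2 * (real n - 1) / (\<sigma> * s\<^sup>2)"
    "2 * (real n - 1) / (\<sigma> * s\<^sup>2) \<le> 2 * (real n - 1) / (\<sigma> * x\<^sup>2)"
    using \<open>1 \<le> n\<close> \<open>\<sigma> > 0\<close> \<open>0 < x\<close> \<open>x < s\<close> by (simp_all add: frac_le power_strict_mono less_imp_le)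
  thus "\<bar>u' s - \<sigma>\<bar> \<le> 2 * (real n - 1) / (\<sigma> * x\<^sup>2)"
    using bounds(3,4)[OF \<open>d < s\<close>] by (simp add: abs_le_iff)
qed

end
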